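(* Assume the Setting and Constants below and that $(L_g,L_c)$ satisfies $(S_n)$. There exists $\varepsilon_0>0$ such that if $0<\varepsilon<\varepsilon_0$, $\|D^2g\|_0\le\varepsilon$ and $\|D^2k_c\|_0\le\varepsilon$, then there exist $r\in C^1_b(X_c,X_c)$, $k_u\in C^1_b(X_c,X_u)$, $k_s\in C^1_b(X_c,X_s)$ such that, with $K(x):=(x+k_c(x))+k_u(x)+k_s(x)$: $F\circ K=K\circ(A_c+r)$; $A_c+r$ is globally invertible with inverse $A_c^{-1}+t$ for some $t\in C^1_b(X_c,X_c)$; $r,t,k_u,k_s$ all vanish at $0$ together with their derivatives at $0$; and $\|Dr\|_0\le L_r$, $\|Dt\|_0\le L_t$, $\|Dk_u\|_0\le L_u$, $\|Dk_s\|_0\le L_s$. In particular the image $K(X_c)$ is a $C^1$ center manifold for $F$ (it is invariant under $F$ and tangent to $X_c$ at $0$).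
   Context: Notation. $C^k_b(Y,Z)$ is the Banach space of $C^k$ maps $f:Y\to Z$ between Banach spaces with $\|f\|_k:=\max_{0\le j\le k}\sup_y\|D^jf(y)\|<\infty$. Setting. Let $n\ge2$ be an integer and $X$ a Banach space with $X=X_c\oplus X_u\oplus X_s$ for closed subspaces, whose norm satisfies $\|x\|=\max\{\|x_c\|,\|x_u\|,\|x_s\|\}$. Let $A$ be a bounded linear operator on $X$ leaving $X_c,X_u,X_s$ invariant, with restrictions $A_c,A_u,A_s$; $A_c,A_u$ invertible, $\|A_c^{-1}\|^{\tilde n}\|A_s\|<1$, $\|A_u^{-1}\|\|A_c\|^{\tilde n}<1$ for $1\le\tilde n\le n$. Let $L_g,L_c\ge0$, $F=A+g$ with $g\in C^n_b(X,X)$, $g(0)=0$, $Dg(0)=0$, $\|Dg\|_0\le L_g$; $k_c\in C^n_b(X_c,X_c)$ with $k_c(0)=0$, $Dk_c(0)=0$, $\|Dk_c\|_0\le L_c$. Constants. $L_r:=\frac{L_g+L_c(2\|A_c\|+L_g)}{1-L_c}$, $L_t:=\frac{\|A_c^{-1}\|^2L_r}{1-\|A_c^{-1}\|L_r}$, $L_u:=\frac{\|A_u^{-1}\|(1+L_c)L_g}{1-L_r\|A_u^{-1}\|-\|A_c\|\|A_u^{-1}\|}$, $L_s:=\frac{\|A_c^{-1}\|(1+L_c)L_g}{1-L_r\|A_c^{-1}\|-\|A_s\|\|A_c^{-1}\|}$, $L_{-1}:=\|A_c^{-1}\|+L_t$; $\theta_{\tilde n,1}:=L_g+L_c$, $\theta_{\tilde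 n,2}:=\|A_u^{-1}\|((\|A_c\|+L_r)^{\tilde n}+L_g+L_u)$, $\theta_{\tilde n,3}:=L_{-1}^{\tilde n}(\|A_s\|(1+L_{-1}L_s)+L_g(1+L_{-1}(1+L_c)))$. $(S_N)$ means: $L_c<1$, $L_r\|A_c^{-1}\|<1$, $L_r\|A_u^{-1}\|+\|A_c\|\|A_u^{-1}\|<1$, $L_r\|A_c^{-1}\|+\|A_s\|\|A_c^{-1}\|<1$, and $\theta_{\tilde n,i}<1$ for $i=1,2,3$, $0\le\tilde n\le N$. *)

theory Defs
  imports "HOL-Analysis.Analysis"
begin

definition ml_bound :: "'a::real_normed_vector set \<Rightarrow> nat \<Rightarrow> ('a list \<Rightarrow> 'b::real_normed_vector) \<Rightarrow> real \<Rightarrow> bool" where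
  "ml_bound S j phi L \<longleftrightarrow>
     (\<forall>vs. length vs = j \<and> set vs \<subseteq> S \<longrightarrow> norm (phi vs) \<le> L * prod_list (map norm vs))"

definition mlinear_on :: "'a::real_normed_vector set \<Rightarrow> nat \<Rightarrow> ('a list \<Rightarrow> 'b::real_normed_vector) \<Rightarrow> bool" where
  "mlinear_on S j phi \<longleftrightarrow>
     (\<forall>i<j. \<forall>vs. length vs = j \<and> set vs \<subseteq> S \<longrightarrow>
        (\<forall>a\<in>S. \<forall>b\<in>S. phi (vs[i := a + b]) = phi (vs[i := a]) + phi (vs[i := b])) \<and>
        (\<forall>c. \<forall>a\<in>S. phi (vs[i := c *\<^sub>R a]) = c *\<^sub>R phi (vs[i := a])))"

text \<open>Ckb k S T f D: f is a C^k map from the subspace S into T with all derivatives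
  D^0 f = f, D^1 f, ..., D^k f bounded (i.e. f belongs to C^k_b(S,T)),
  and D j y is the j-th Frechet derivative of f at y, as a j-linear map;
  convention: D (j+1) y (h # vs) = (D (D^j f)(y) h) vs.\<close>
definition Ckb :: "nat \<Rightarrow> 'a::real_normed_vector set \<Rightarrow> 'b::real_normed_vector set \<Rightarrow> ('a \<Rightarrow> 'b)
                   \<Rightarrow> (nat \<Rightarrow> 'a \<Rightarrow> 'a list \<Rightarrow> 'b) \<Rightarrow> bool" where
  "Ckb k S T f D \<longleftrightarrow>
     (\<forall>y\<in>S. f y \<in> T \<and> D 0 y [] = f y) \<and>
     (\<forall>j\<le>k. \<forall>y\<in>S. mlinear_on S j (D j y) \<and>
                      (\<forall>vs. length vs = j \<and> set vs \<subseteq> S \<longrightarrow> D j y vs \<in> T)) \<and>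
     (\<forall>j\<le>k. \<exists>B. \<forall>y\<in>S. ml_bound S j (D j y) B) \<and>
     (\<forall>j<k. \<forall>y\<in>S. \<forall>e>0. \<exists>d>0. \<forall>h\<in>S. norm h < d \<longrightarrow>
          ml_bound S j (\<lambda>vs. D j (y + h) vs - D j y vs - D (Suc j) y (h # vs)) (e * norm h)) \<and>
     (\<forall>y\<in>S. \<forall>e>0. \<exists>d>0. \<forall>z\<in>S. norm (z - y) < d \<longrightarrow>
          ml_bound S k (\<lambda>vs. D k z vs - D k y vs) e)"

definition onorm_on :: "'a::real_normed_vector set \<Rightarrow> ('a \<Rightarrow> 'b::real_normed_vector) \<Rightarrow> real" where
  "onorm_on S f = Inf {L. 0 \<le> L \<and> (\<forall>x\<in>S. norm (f x) \<le> L * norm x)}"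

text \<open>The constants; ac = |A_c|, aci = |A_c^-1|, aui = |A_u^-1|, as = |A_s|.\<close>
definition cLr :: "real \<Rightarrow> real \<Rightarrow> real \<Rightarrow> real" where
  "cLr ac Lg Lc = (Lg + Lc * (2 * ac + Lg)) / (1 - Lc)"
definition cLt :: "real \<Rightarrow> real \<Rightarrow> real" where
  "cLt aci Lr = aci^2 * Lr / (1 - aci * Lr)"
definition cLu :: "real \<Rightarrow> real \<Rightarrow> real \<Rightarrow> real \<Rightarrow> real \<Rightarrow> real" where
  "cLu ac aui Lr Lg Lc = aui * (1 + Lc) * Lg / (1 - Lr * aui - ac * aui)"
definition cLs :: "real \<Rightarrow> real \<Rightarrow> real \<Rightarrow> real \<Rightarrow> real \<Rightarrow> real" where
  "cLs aci as Lr Lg Lc = aci * (1 + Lc) * Lg / (1 - Lr * aci - as * aci)"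

definition SN_cond :: "nat \<Rightarrow> real \<Rightarrow> real \<Rightarrow> real \<Rightarrow> real \<Rightarrow> real \<Rightarrow> real \<Rightarrow> bool" where
  "SN_cond N ac aci aui as Lg Lc \<longleftrightarrow>
     (let Lr = cLr ac Lg Lc; Lt = cLt aci Lr; Lu = cLu ac aui Lr Lg Lc;
          Ls = cLs aci as Lr Lg Lc; Lm1 = aci + Lt in
      Lc < 1 \<and> Lr * aci < 1 \<and> Lr * aui + ac * aui < 1 \<and> Lr * aci + as * aci < 1 \<and>
      (\<forall>m\<le>N. Lg + Lc < 1 \<and>
               aui * ((ac + Lr)^m + Lg + Lu) < 1 \<and>
               Lm1^m * (as * (1 + Lm1 * Ls) + Lg * (1 + Lm1 * (1 + Lc))) < 1))"

end

theory Submission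
  imports Defs
begin

(*
  The centre manifold is the graph of K x = x + kc x + ku x + ks x over Xc, found as the fixed
  point of a graph transform.  Splitting the conjugacy F (K x) = K (A x + r x) along
  Xc, Xu, Xs gives one equation for each of r, ku and ks: the Xc-part defines r, the Xu-part is
  solved for ku through the expansion A_u^-1, and the Xs-part for ks at the preimage of x under
  A_c + r, whose inverse A_c^-1 + t is a fourth unknown.  Under (S_2) the transform maps the set
  of bounded maps vanishing to first order at 0, with derivative bounds Lr, Lt, Lu, Ls and
  quadratic Taylor remainders, into itself, and it contracts a weighted sup-distance because
  (S_0) holds.  The iterates converge uniformly; the quadratic remainder bounds make their
  derivatives converge as well, so the limit stays in the set and is the fixed point.  Bounded inverses of
  A on Xc and Xu come from the bounded inverse theorem, proved from Baire's theorem.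
*)

section \<open>Bounded inverse theorem on closed subspaces\<close>

lemma Baire_ball_in_closure_image:
  fixes T :: "'a::banach \<Rightarrow> 'a"
  assumes sub: "subspace S" and cl: "closed S" and surj: "T ` S = S"
  obtains n y0 \<rho> where "0 < \<rho>" "y0 \<in> S"
    "\<And>z. z \<in> S \<Longrightarrow> norm (z - y0) < \<rho> \<Longrightarrow> z \<in> closure (T ` (S \<inter> cball 0 (real n)))"
proof -
  define E where "E n = closure (T ` (S \<inter> cball 0 (real n)))" for n :: nat
  have ES: "E n \<subseteq> S" for n
    unfolding E_def using surj cl by (metis closure_minimal image_mono inf_le1)
  have "\<Union> (range E) = S"
  proof
    show "S \<subseteq> \<Union> (range E)"
    proof
      fix y assume "y \<in> S"
      then obtain x where x: "x \<in> S" "y = T x" using surj by auto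
      obtain n :: nat where "norm x \<le> real n" using real_arch_simple by blast
      then have "y \<in> E n" unfolding E_def using x closure_subset by fastforce
      then show "y \<in> \<Union> (range E)" by auto
    qed
  qed (use ES in auto)
  moreover have "completely_metrizable_space (top_of_set S)"
    by (rule completely_metrizable_space_closedin[OF completely_metrizable_space_euclidean])
       (use cl closed_closedin in auto)
  moreover have "closedin (top_of_set S) (E n)" for n
    using ES by (simp add: E_def closed_subset)
  moreover have "top_of_set S interior_of S \<noteq> {}"
    using sub subspace_0 by (fastforce simp: interior_of_openin)
  ultimately obtain n where "top_of_set S interior_of E n \<noteq> {}"
    using Baire_category_alt[of "top_of_set S" "range E"] by auto
  then obtain y0 U where U: "openin (top_of_set S) U" "y0 \<in> U" "U \<subseteq> E n"
    unfolding interior_of_def by blast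
  then obtain V where V: "open V" "U = S \<inter> V" by (auto simp: openin_open)
  then obtain \<rho> where "\<rho> > 0" "ball y0 \<rho> \<subseteq> V" using U open_contains_ball by blast
  show thesis
  proof (rule that)
    fix z assume "z \<in> S" "norm (z - y0) < \<rho>"
    then have "z \<in> U" using \<open>ball y0 \<rho> \<subseteq> V\<close> V(2) by (auto simp: dist_norm norm_minus_commute)
    then show "z \<in> closure (T ` (S \<inter> cball 0 (real n)))" using U(3) by (simp add: E_def subset_eq)
  qed (use \<open>\<rho> > 0\<close> U V in auto)
qed

lemma approximate_preimage_near_zero:
  fixes T :: "'a::banach \<Rightarrow> 'a"
  assumes sub: "subspace S" and cl: "closed S" and T: "bounded_linear T" and surj: "T ` S = S"
  obtains n \<rho> where "0 < \<rho>"
    "\<And>z \<eta>. z \<in> S \<Longrightarrow> norm z < \<rho> \<Longrightarrow> \<eta> > 0 \<Longrightarrow> \<exists>x\<in>S. norm x \<le> 2 * real n \<and> norm (T x - z) < \<eta>"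
proof -
  interpret T: bounded_linear T by fact
  obtain n y0 \<rho> where \<rho>: "0 < \<rho>" and y0: "y0 \<in> S"
    and inE: "\<And>z. z \<in> S \<Longrightarrow> norm (z - y0) < \<rho> \<Longrightarrow> z \<in> closure (T ` (S \<inter> cball 0 (real n)))"
    using Baire_ball_in_closure_image[OF sub cl surj] by metis
  have near: "\<exists>x\<in>S. norm x \<le> n \<and> norm (T x - w) < \<eta>"
    if "w \<in> S" "norm (w - y0) < \<rho>" "\<eta> > 0" for w \<eta>
    using inE[OF that(1,2)] that(3) unfolding closure_approachable by (force simp: dist_norm)
  show thesis
  proof (rule that[OF \<rho>])
    fix z \<eta> assume z: "z \<in> S" "norm z < \<rho>" and \<eta>: "(\<eta>::real) > 0"
    \<comment> \<open>Differences of approximate preimages of y0 + z and y0 approximate z.\<close>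
    obtain x1 where x1: "x1 \<in> S" "norm x1 \<le> n" "norm (T x1 - (y0 + z)) < \<eta>/2"
      using near[of "y0 + z" "\<eta>/2"] z y0 \<eta> sub by (auto simp: subspace_add)
    obtain x2 where x2: "x2 \<in> S" "norm x2 \<le> n" "norm (T x2 - y0) < \<eta>/2"
      using near[of y0 "\<eta>/2"] y0 \<rho> \<eta> by auto
    have "T (x1 - x2) - z = (T x1 - (y0 + z)) - (T x2 - y0)" by (simp add: T.diff)
    then have "norm (T (x1 - x2) - z) \<le> norm (T x1 - (y0 + z)) + norm (T x2 - y0)"
      by (metis norm_triangle_ineq4)
    then have "norm (T (x1 - x2) - z) < \<eta>" using x1(3) x2(3) by linarith
    moreover have "norm (x1 - x2) \<le> 2 * real n"
      using norm_triangle_ineq4[of x1 x2] x1 x2 by linarith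
    ultimately show "\<exists>x\<in>S. norm x \<le> 2 * real n \<and> norm (T x - z) < \<eta>"
      using x1 x2 sub by (metis subspace_diff)
  qed
qed

lemma approximate_bounded_preimage:
  fixes T :: "'a::banach \<Rightarrow> 'a"
  assumes sub: "subspace S" and cl: "closed S" and T: "bounded_linear T" and surj: "T ` S = S"
  obtains c where "c > 0"
    "\<And>z \<eta>. z \<in> S \<Longrightarrow> \<eta> > 0 \<Longrightarrow> \<exists>x\<in>S. norm x \<le> c * norm z \<and> norm (T x - z) < \<eta>"
proof -
  interpret T: bounded_linear T by fact
  obtain n \<rho> where \<rho>: "0 < \<rho>"
    and small: "\<And>z \<eta>. z \<in> S \<Longrightarrow> norm z < \<rho> \<Longrightarrow> \<eta> > 0 \<Longrightarrow> \<exists>x\<in>S. norm x \<le> 2 * real n \<and> norm (T x - z) < \<eta>"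
    using approximate_preimage_near_zero[OF sub cl T surj] by metis
  define c where "c = 4 * real n / \<rho> + 1"
  show thesis
  proof (rule that)
    show "c > 0" unfolding c_def using \<rho> by (simp add: add_nonneg_pos)
    fix z \<eta> assume z: "z \<in> S" and \<eta>: "(\<eta>::real) > 0"
    show "\<exists>x\<in>S. norm x \<le> c * norm z \<and> norm (T x - z) < \<eta>"
    proof (cases "z = 0")
      case True then show ?thesis using \<eta> sub subspace_0 by fastforce
    next
      case False
      define a where "a = \<rho> / (2 * norm z)"
      have a: "a > 0" "norm (a *\<^sub>R z) < \<rho>" using False \<rho> by (simp_all add: a_def)
      obtain x where x: "x \<in> S" "norm x \<le> 2 * real n" "norm (T x - a *\<^sub>R z) < \<eta> * a"
        using small[of "a *\<^sub>R z" "\<eta> * a"] z \<eta> a sub by (auto simp: subspace_scale)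
      have "norm ((1/a) *\<^sub>R x) \<le> 2 * real n / a" using x a by (simp add: divide_right_mono)
      also have "\<dots> \<le> c * norm z" unfolding a_def c_def using False \<rho> by (simp add: field_simps)
      finally have "norm ((1/a) *\<^sub>R x) \<le> c * norm z" .
      moreover have "T ((1/a) *\<^sub>R x) - z = (1/a) *\<^sub>R (T x - a *\<^sub>R z)"
        using a by (simp add: T.scale algebra_simps)
      then have "norm (T ((1/a) *\<^sub>R x) - z) < \<eta>" using x a by (simp add: divide_less_eq)
      ultimately show ?thesis using x sub by (metis subspace_scale)
    qed
  qed
qed

lemma successive_approximation:
  fixes T :: "'a::real_normed_vector \<Rightarrow> 'a"
  assumes sub: "subspace S" and TS: "T ` S \<subseteq> S" and c: "0 \<le> c"
    and approx: "\<And>z \<eta>. z \<in> S \<Longrightarrow> \<eta> > 0 \<Longrightarrow> \<exists>x\<in>S. norm x \<le> c * norm z \<and> norm (T x - z) < \<eta>"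
    and y: "y \<in> S" "y \<noteq> 0"
  obtains x where "\<And>k. x k \<in> S" "\<And>k. norm (x k) \<le> c * norm y * (1/2) ^ k"
    "\<And>m. norm (y - (\<Sum>k<m. T (x k))) \<le> norm y / 2 ^ m"
proof -
  define pick where "pick k w = (SOME x. x \<in> S \<and> norm x \<le> c * norm w \<and> norm (T x - w) < norm y / 2 ^ Suc k)"
    for k w
  have pick: "pick k w \<in> S \<and> norm (pick k w) \<le> c * norm w \<and> norm (T (pick k w) - w) < norm y / 2 ^ Suc k"
    if "w \<in> S" for k w
    unfolding pick_def by (rule someI_ex) (use approx[OF that, of "norm y / 2 ^ Suc k"] y in auto)
  \<comment> \<open>z k is the residual left after the corrections x 0, ..., x (k - 1).\<close>
  define z where "z = rec_nat y (\<lambda>k w. w - T (pick k w))"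
  define x where "x k = pick k (z k)" for k
  have z_Suc: "z (Suc k) = z k - T (x k)" for k by (simp add: z_def x_def)
  have z: "z k \<in> S \<and> norm (z k) \<le> norm y / 2 ^ k" for k
  proof (induction k)
    case (Suc k)
    then show ?case
      using pick[of "z k" k] TS sub by (auto simp: z_Suc x_def subspace_diff norm_minus_commute)
  qed (simp add: z_def y)
  show thesis
  proof (rule that)
    show "x k \<in> S" for k using pick z by (simp add: x_def)
    show "norm (x k) \<le> c * norm y * (1/2) ^ k" for k
    proof -
      have "norm (x k) \<le> c * norm (z k)" using pick[of "z k" k] z[of k] by (simp add: x_def)
      also have "\<dots> \<le> c * (norm y / 2 ^ k)" by (rule mult_left_mono) (use z[of k] c in auto)
      finally show ?thesis by (simp add: power_one_over)
    qed
    have "(\<Sum>k<m. T (x k)) = y - z m" for m by (induction m) (auto simp: z_Suc, simp add: z_def)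
    then show "norm (y - (\<Sum>k<m. T (x k))) \<le> norm y / 2 ^ m" for m using z by simp
  qed
qed

lemma exact_bounded_preimage:
  fixes T :: "'a::banach \<Rightarrow> 'a"
  assumes sub: "subspace S" and cl: "closed S" and T: "bounded_linear T" and TS: "T ` S \<subseteq> S"
    and c: "c > 0"
    and approx: "\<And>z \<eta>. z \<in> S \<Longrightarrow> \<eta> > 0 \<Longrightarrow> \<exists>x\<in>S. norm x \<le> c * norm z \<and> norm (T x - z) < \<eta>"
    and y: "y \<in> S"
  shows "\<exists>x\<in>S. T x = y \<and> norm x \<le> 2 * c * norm y"
proof (cases "y = 0")
  case True then show ?thesis using sub subspace_0 linear_0[OF bounded_linear.linear[OF T]] by fastforce
next
  case False
  interpret T: bounded_linear T by fact
  obtain x where xS: "\<And>k. x k \<in> S" and x_le: "\<And>k. norm (x k) \<le> c * norm y * (1/2) ^ k"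
    and residual: "\<And>m. norm (y - (\<Sum>k<m. T (x k))) \<le> norm y / 2 ^ m"
    using successive_approximation[OF sub TS less_imp_le[OF c] approx y False] by metis
  have geom: "summable (\<lambda>k. c * norm y * (1/2::real) ^ k)"
    by (intro summable_mult summable_geometric) simp
  have sn: "summable (\<lambda>k. norm (x k))"
    by (rule summable_comparison_test[OF _ geom]) (use x_le in auto)
  then have sx: "summable x" by (rule summable_norm_cancel)
  have "suminf x \<in> S"
    using closed_sequentially[OF cl, of "\<lambda>m. \<Sum>k<m. x k"] summable_LIMSEQ[OF sx] xS sub
    by (simp add: subspace_sum)
  moreover have "T (suminf x) = y"
  proof -
    have "(\<lambda>m. norm y / 2 ^ m) \<longlonglongrightarrow> 0" by (intro LIMSEQ_divide_realpow_zero) auto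
    then have "(\<lambda>m. y - (\<Sum>k<m. T (x k))) \<longlonglongrightarrow> 0"
      by (rule Lim_null_comparison[rotated]) (use residual in auto)
    then have "(\<lambda>m. y - (y - (\<Sum>k<m. T (x k)))) \<longlonglongrightarrow> y - 0" by (intro tendsto_intros)
    then have "(\<lambda>k. T (x k)) sums y" by (simp add: sums_def)
    then show ?thesis using T.sums[OF summable_sums[OF sx]] sums_unique2 by blast
  qed
  moreover have "norm (suminf x) \<le> 2 * c * norm y"
  proof -
    have "norm (suminf x) \<le> (\<Sum>k. norm (x k))" using summable_norm sn by blast
    also have "\<dots> \<le> (\<Sum>k. c * norm y * (1/2) ^ k)" by (intro suminf_le sn geom) (use x_le in auto)
    also have "\<dots> = 2 * c * norm y" by (simp add: suminf_mult suminf_geometric)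
    finally show ?thesis .
  qed
  ultimately show ?thesis by blast
qed

theorem bounded_inverse_on:
  fixes T :: "'a::banach \<Rightarrow> 'a"
  assumes sub: "subspace S" and cl: "closed S" and T: "bounded_linear T" and bij: "bij_betw T S S"
  obtains C where "C > 0" "\<And>y. y \<in> S \<Longrightarrow> norm (inv_into S T y) \<le> C * norm y"
proof -
  have surj: "T ` S = S" using bij by (simp add: bij_betw_def)
  obtain c where c: "c > 0"
    "\<And>z \<eta>. z \<in> S \<Longrightarrow> \<eta> > 0 \<Longrightarrow> \<exists>x\<in>S. norm x \<le> c * norm z \<and> norm (T x - z) < \<eta>"
    using approximate_bounded_preimage[OF sub cl T surj] by metis
  show thesis
  proof (rule that[of "2 * c"])
    fix y assume y: "y \<in> S"
    obtain x where "x \<in> S" "T x = y" "norm x \<le> 2 * c * norm y"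
      using exact_bounded_preimage[OF sub cl T _ c y] surj by auto
    then show "norm (inv_into S T y) \<le> 2 * c * norm y"
      using bij by (metis bij_betw_def inv_into_f_f)
  qed (use c in simp)
qed

section \<open>Maps with quadratic Taylor remainder\<close>

definition linear_on :: "'a::real_vector set \<Rightarrow> ('a \<Rightarrow> 'b::real_vector) \<Rightarrow> bool" where
  "linear_on W l \<longleftrightarrow> (\<forall>a\<in>W. \<forall>b\<in>W. l (a + b) = l a + l b) \<and> (\<forall>c. \<forall>a\<in>W. l (c *\<^sub>R a) = c *\<^sub>R l a)"

lemma linear_onD:
  assumes "linear_on W l"
  shows "a \<in> W \<Longrightarrow> b \<in> W \<Longrightarrow> l (a + b) = l a + l b" "a \<in> W \<Longrightarrow> l (c *\<^sub>R a) = c *\<^sub>R l a"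
  using assms unfolding linear_on_def by auto

lemma linear_on_0:
  assumes "linear_on W l" "subspace W"
  shows "l 0 = 0"
  using linear_onD(2)[OF assms(1), of 0 0] assms(2) subspace_0 by fastforce

lemma linear_on_diff:
  assumes l: "linear_on W l" and W: "subspace W" and "a \<in> W" "b \<in> W"
  shows "l (a - b) = l a - l b"
proof -
  have "l (- b) = - l b" using linear_onD(2)[OF l \<open>b \<in> W\<close>, of "-1"] by simp
  then show ?thesis
    using linear_onD(1)[OF l \<open>a \<in> W\<close>, of "- b"] W \<open>b \<in> W\<close> by (simp add: subspace_neg)
qed

lemma linear_on_inv_into:
  assumes W: "subspace W" and l: "linear_on W l" and bij: "bij_betw l W W"
  shows "linear_on W (inv_into W l)"
proof -
  have inj: "inj_on l W" and inv: "\<And>x. x \<in> W \<Longrightarrow> inv_into W l x \<in> W \<and> l (inv_into W l x) = x"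
    using bij by (auto simp: bij_betw_def inv_into_into f_inv_into_f)
  show ?thesis
    unfolding linear_on_def
  proof (intro conjI ballI allI)
    fix a b assume "a \<in> W" "b \<in> W"
    then show "inv_into W l (a + b) = inv_into W l a + inv_into W l b"
      by (intro inv_into_f_eq[OF inj]) (simp_all add: inv W subspace_add linear_onD(1)[OF l])
  next
    fix c a assume "a \<in> W"
    then show "inv_into W l (c *\<^sub>R a) = c *\<^sub>R inv_into W l a"
      by (intro inv_into_f_eq[OF inj]) (simp_all add: inv W subspace_scale linear_onD(2)[OF l])
  qed
qed

lemma onorm_on_bound:
  assumes "0 \<le> L" "\<And>x. x \<in> S \<Longrightarrow> norm (f x) \<le> L * norm x"
  shows "\<And>x. x \<in> S \<Longrightarrow> norm (f x) \<le> onorm_on S f * norm x" "0 \<le> onorm_on S f"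
proof -
  let ?M = "{L. 0 \<le> L \<and> (\<forall>x\<in>S. norm (f x) \<le> L * norm x)}"
  have ne: "?M \<noteq> {}" using assms by blast
  show "0 \<le> onorm_on S f" unfolding onorm_on_def by (rule cInf_greatest[OF ne]) auto
  fix x assume x: "x \<in> S"
  show "norm (f x) \<le> onorm_on S f * norm x"
  proof (cases "x = 0")
    case True then show ?thesis using assms(2)[OF x] by simp
  next
    case False
    have "norm (f x) / norm x \<le> onorm_on S f"
      unfolding onorm_on_def by (rule cInf_greatest[OF ne]) (use x False in \<open>auto simp: divide_le_eq\<close>)
    then show ?thesis using False by (simp add: divide_le_eq mult.commute)
  qed
qed

text \<open>
  In \<open>C11 W V f Df L N\<close> the bound \<open>N\<close> on the first-order Taylor remainder stands in for a
  Lipschitz constant of the derivative; unlike the latter it passes to pointwise limits.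
\<close>
definition C11 :: "'a::real_normed_vector set \<Rightarrow> 'b::real_normed_vector set \<Rightarrow> ('a \<Rightarrow> 'b)
    \<Rightarrow> ('a \<Rightarrow> 'a \<Rightarrow> 'b) \<Rightarrow> real \<Rightarrow> real \<Rightarrow> bool" where
  "C11 W V f Df L N \<longleftrightarrow>
     (\<forall>x\<in>W. f x \<in> V) \<and> (\<forall>x\<in>W. \<forall>h\<in>W. Df x h \<in> V) \<and> (\<forall>x\<in>W. linear_on W (Df x)) \<and>
     (\<forall>x\<in>W. \<forall>h\<in>W. norm (Df x h) \<le> L * norm h) \<and>
     (\<forall>x\<in>W. \<forall>z\<in>W. norm (f z - f x) \<le> L * norm (z - x)) \<and>
     (\<forall>x\<in>W. \<forall>h\<in>W. norm (f (x + h) - f x - Df x h) \<le> N * (norm h)\<^sup>2)"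

lemma C11I:
  assumes "\<And>x. x \<in> W \<Longrightarrow> f x \<in> V" "\<And>x h. x \<in> W \<Longrightarrow> h \<in> W \<Longrightarrow> Df x h \<in> V"
    "\<And>x. x \<in> W \<Longrightarrow> linear_on W (Df x)"
    "\<And>x h. x \<in> W \<Longrightarrow> h \<in> W \<Longrightarrow> norm (Df x h) \<le> L * norm h"
    "\<And>x z. x \<in> W \<Longrightarrow> z \<in> W \<Longrightarrow> norm (f z - f x) \<le> L * norm (z - x)"
    "\<And>x h. x \<in> W \<Longrightarrow> h \<in> W \<Longrightarrow> norm (f (x + h) - f x - Df x h) \<le> N * (norm h)\<^sup>2"
  shows "C11 W V f Df L N"
  using assms unfolding C11_def by blast

lemma C11D:
  assumes "C11 W V f Df L N"
  shows "x \<in> W \<Longrightarrow> f x \<in> V" "x \<in> W \<Longrightarrow> h \<in> W \<Longrightarrow> Df x h \<in> V"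
    "x \<in> W \<Longrightarrow> linear_on W (Df x)"
    "x \<in> W \<Longrightarrow> h \<in> W \<Longrightarrow> norm (Df x h) \<le> L * norm h"
    "x \<in> W \<Longrightarrow> z \<in> W \<Longrightarrow> norm (f z - f x) \<le> L * norm (z - x)"
    "x \<in> W \<Longrightarrow> h \<in> W \<Longrightarrow> norm (f (x + h) - f x - Df x h) \<le> N * (norm h)\<^sup>2"
  using assms unfolding C11_def by blast+

lemma C11_mono:
  assumes f: "C11 W V f Df L N" and "L \<le> L'" "N \<le> N'"
  shows "C11 W V f Df L' N'"
proof (rule C11I)
  fix x h assume "x \<in> W" "h \<in> W"
  show "norm (Df x h) \<le> L' * norm h"
    using C11D(4)[OF f \<open>x \<in> W\<close> \<open>h \<in> W\<close>] \<open>L \<le> L'\<close> by (meson mult_right_mono norm_ge_zero order_trans)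
  show "norm (f (x + h) - f x - Df x h) \<le> N' * (norm h)\<^sup>2"
    using C11D(6)[OF f \<open>x \<in> W\<close> \<open>h \<in> W\<close>] \<open>N \<le> N'\<close> by (meson mult_right_mono zero_le_power2 order_trans)
next
  fix x z assume "x \<in> W" "z \<in> W"
  show "norm (f z - f x) \<le> L' * norm (z - x)"
    using C11D(5)[OF f \<open>x \<in> W\<close> \<open>z \<in> W\<close>] \<open>L \<le> L'\<close> by (meson mult_right_mono norm_ge_zero order_trans)
qed (use C11D[OF f] in auto)

lemma C11_comp:
  assumes W1: "subspace W1" and W2: "subspace W2"
    and f: "C11 W2 V f Df Lf Nf" and p: "C11 W1 W2 p Dp Lp Np"
    and Lf: "0 \<le> Lf" and Nf: "0 \<le> Nf"
  shows "C11 W1 V (\<lambda>x. f (p x)) (\<lambda>x h. Df (p x) (Dp x h)) (Lf * Lp) (Nf * Lp\<^sup>2 + Lf * Np)"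
proof (rule C11I)
  fix x assume x: "x \<in> W1"
  have px: "p x \<in> W2" using C11D(1)[OF p x] .
  show "f (p x) \<in> V" using C11D(1)[OF f px] .
  show "linear_on W1 (\<lambda>h. Df (p x) (Dp x h))"
    using linear_onD[OF C11D(3)[OF p x]] linear_onD[OF C11D(3)[OF f px]] C11D(2)[OF p x]
    by (simp add: linear_on_def)
  fix h assume h: "h \<in> W1"
  have dp: "Dp x h \<in> W2" using C11D(2)[OF p x h] .
  show "Df (p x) (Dp x h) \<in> V" using C11D(2)[OF f px dp] .
  have "norm (Df (p x) (Dp x h)) \<le> Lf * norm (Dp x h)" using C11D(4)[OF f px dp] .
  also have "\<dots> \<le> Lf * (Lp * norm h)" using C11D(4)[OF p x h] Lf by (simp add: mult_left_mono)
  finally show "norm (Df (p x) (Dp x h)) \<le> Lf * Lp * norm h" by (simp add: mult.assoc)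
  \<comment> \<open>Split the remainder at the increment a of p: remainder of f along a plus Df applied to the remainder of p.\<close>
  have xh: "x + h \<in> W1" using W1 x h by (simp add: subspace_add)
  define a where "a = p (x + h) - p x"
  have aW: "a \<in> W2" unfolding a_def using W2 C11D(1)[OF p xh] px by (simp add: subspace_diff)
  have "(norm a)\<^sup>2 \<le> (Lp * norm h)\<^sup>2"
    unfolding a_def using C11D(5)[OF p x xh] by (simp add: power_mono)
  then have "Nf * (norm a)\<^sup>2 \<le> Nf * (Lp * norm h)\<^sup>2" using Nf by (rule mult_left_mono)
  then have e1: "norm (f (p x + a) - f (p x) - Df (p x) a) \<le> Nf * Lp\<^sup>2 * (norm h)\<^sup>2"
    using C11D(6)[OF f px aW] by (simp add: power_mult_distrib mult.assoc)
  have adW: "a - Dp x h \<in> W2" using aW dp W2 by (simp add: subspace_diff)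
  have "norm (Df (p x) (a - Dp x h)) \<le> Lf * norm (a - Dp x h)" using C11D(4)[OF f px adW] .
  also have "\<dots> \<le> Lf * (Np * (norm h)\<^sup>2)"
    using C11D(6)[OF p x h] Lf unfolding a_def by (simp add: mult_left_mono)
  finally have e2: "norm (Df (p x) (a - Dp x h)) \<le> Lf * (Np * (norm h)\<^sup>2)" .
  have e: "f (p (x + h)) - f (p x) - Df (p x) (Dp x h)
      = (f (p x + a) - f (p x) - Df (p x) a) + Df (p x) (a - Dp x h)"
    using linear_on_diff[OF C11D(3)[OF f px] W2 aW dp] by (simp add: a_def)
  show "norm (f (p (x + h)) - f (p x) - Df (p x) (Dp x h)) \<le> (Nf * Lp\<^sup>2 + Lf * Np) * (norm h)\<^sup>2"
    unfolding e by (rule order_trans[OF norm_triangle_mono[OF e1 e2]]) (simp add: algebra_simps)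
next
  fix x z assume x: "x \<in> W1" and z: "z \<in> W1"
  have "norm (f (p z) - f (p x)) \<le> Lf * norm (p z - p x)"
    using C11D(5)[OF f] C11D(1)[OF p] x z by blast
  also have "\<dots> \<le> Lf * (Lp * norm (z - x))" using C11D(5)[OF p x z] Lf by (simp add: mult_left_mono)
  finally show "norm (f (p z) - f (p x)) \<le> Lf * Lp * norm (z - x)" by (simp add: mult.assoc)
qed

lemma C11_linear:
  assumes W: "subspace W" and V: "subspace V" and l: "linear_on V l" and lV: "\<And>v. v \<in> V \<Longrightarrow> l v \<in> V'"
    and lb: "\<And>v. v \<in> V \<Longrightarrow> norm (l v) \<le> a * norm v" and a: "0 \<le> a"
    and f: "C11 W V f Df L N"
  shows "C11 W V' (\<lambda>x. l (f x)) (\<lambda>x h. l (Df x h)) (a * L) (a * N)"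
proof -
  have lb': "norm (l v) \<le> a * b * t" if "v \<in> V" "norm v \<le> b * t" for v b t
  proof -
    have "norm (l v) \<le> a * norm v" using lb[OF that(1)] .
    also have "\<dots> \<le> a * (b * t)" using that(2) a by (rule mult_left_mono)
    finally show ?thesis by (simp add: mult.assoc)
  qed
  show ?thesis
  proof (rule C11I)
  fix x assume x: "x \<in> W"
  show "l (f x) \<in> V'" using lV C11D(1)[OF f x] .
  show "linear_on W (\<lambda>h. l (Df x h))"
    unfolding linear_on_def using linear_onD[OF l] linear_onD[OF C11D(3)[OF f x]] C11D(2)[OF f x] by simp
  fix h assume h: "h \<in> W"
  show "l (Df x h) \<in> V'" using lV C11D(2)[OF f x h] .
  show "norm (l (Df x h)) \<le> a * L * norm h" using lb' C11D(2,4)[OF f x h] .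
  have xh: "x + h \<in> W" using W x h by (simp add: subspace_add)
  have "l (f (x + h)) - l (f x) - l (Df x h) = l (f (x + h) - f x - Df x h)"
    using linear_on_diff[OF l V] C11D(1)[OF f xh] C11D(1)[OF f x] C11D(2)[OF f x h] V
    by (simp add: subspace_diff)
  moreover have "f (x + h) - f x - Df x h \<in> V"
    using C11D(1)[OF f xh] C11D(1)[OF f x] C11D(2)[OF f x h] V by (simp add: subspace_diff)
  ultimately show "norm (l (f (x + h)) - l (f x) - l (Df x h)) \<le> a * N * (norm h)\<^sup>2"
    using lb' C11D(6)[OF f x h] by simp
next
  fix x z assume x: "x \<in> W" and z: "z \<in> W"
  have "l (f z) - l (f x) = l (f z - f x)" using linear_on_diff[OF l V] C11D(1)[OF f] x z by simp
  moreover have "f z - f x \<in> V" using C11D(1)[OF f] x z V by (simp add: subspace_diff)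
  ultimately show "norm (l (f z) - l (f x)) \<le> a * L * norm (z - x)"
    using lb'[OF _ C11D(5)[OF f x z]] by simp
  qed
qed

lemma C11_add:
  assumes V: "subspace V" and f: "C11 W V f Df L1 N1" and g: "C11 W V g Dg L2 N2"
  shows "C11 W V (\<lambda>x. f x + g x) (\<lambda>x h. Df x h + Dg x h) (L1 + L2) (N1 + N2)"
proof (rule C11I)
  fix x assume x: "x \<in> W"
  show "f x + g x \<in> V" using C11D(1)[OF f x] C11D(1)[OF g x] V by (simp add: subspace_add)
  show "linear_on W (\<lambda>h. Df x h + Dg x h)"
    unfolding linear_on_def using linear_onD[OF C11D(3)[OF f x]] linear_onD[OF C11D(3)[OF g x]]
    by (simp add: algebra_simps scaleR_add_right)
  fix h assume h: "h \<in> W"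
  show "Df x h + Dg x h \<in> V" using C11D(2)[OF f x h] C11D(2)[OF g x h] V by (simp add: subspace_add)
  show "norm (Df x h + Dg x h) \<le> (L1 + L2) * norm h"
    using norm_triangle_mono[OF C11D(4)[OF f x h] C11D(4)[OF g x h]] by (simp add: distrib_right)
  have e: "f (x + h) + g (x + h) - (f x + g x) - (Df x h + Dg x h)
      = (f (x + h) - f x - Df x h) + (g (x + h) - g x - Dg x h)"
    by (simp add: algebra_simps)
  show "norm (f (x + h) + g (x + h) - (f x + g x) - (Df x h + Dg x h)) \<le> (N1 + N2) * (norm h)\<^sup>2"
    unfolding e distrib_right by (rule norm_triangle_mono[OF C11D(6)[OF f x h] C11D(6)[OF g x h]])
next
  fix x z assume x: "x \<in> W" and z: "z \<in> W"
  have e: "f z + g z - (f x + g x) = (f z - f x) + (g z - g x)" by simp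
  show "norm (f z + g z - (f x + g x)) \<le> (L1 + L2) * norm (z - x)"
    unfolding e distrib_right by (rule norm_triangle_mono[OF C11D(5)[OF f x z] C11D(5)[OF g x z]])
qed

lemma C11_uminus:
  assumes W: "subspace W" and V: "subspace V" and f: "C11 W V f Df L N"
  shows "C11 W V (\<lambda>x. - f x) (\<lambda>x h. - Df x h) L N"
proof -
  have "C11 W V (\<lambda>x. (-1) *\<^sub>R f x) (\<lambda>x h. (-1) *\<^sub>R Df x h) (1 * L) (1 * N)"
    by (rule C11_linear[OF W V _ _ _ _ f]) (auto simp: linear_on_def V subspace_neg)
  then show ?thesis by simp
qed

lemma C11_diff:
  assumes W: "subspace W" and V: "subspace V" and f: "C11 W V f Df L1 N1" and g: "C11 W V g Dg L2 N2"
  shows "C11 W V (\<lambda>x. f x - g x) (\<lambda>x h. Df x h - Dg x h) (L1 + L2) (N1 + N2)"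
  using C11_add[OF V f C11_uminus[OF W V g]] by simp

lemma C11_id: "C11 W W (\<lambda>x. x) (\<lambda>x h. h) 1 0"
  by (rule C11I) (auto simp: linear_on_def)

lemma C11_linear_map:
  assumes W: "subspace W" and l: "linear_on W l" and lV: "\<And>v. v \<in> W \<Longrightarrow> l v \<in> V"
    and lb: "\<And>v. v \<in> W \<Longrightarrow> norm (l v) \<le> a * norm v" and a: "0 \<le> a"
  shows "C11 W V l (\<lambda>x h. l h) a 0"
  using C11_linear[OF W W l lV lb a C11_id] by simp

lemma C11_zero: "0 \<in> V \<Longrightarrow> 0 \<le> L \<Longrightarrow> 0 \<le> N \<Longrightarrow> C11 W V (\<lambda>x. 0) (\<lambda>x h. 0) L N"
  by (rule C11I) (simp_all add: linear_on_def)

lemma norm_diff_add_le: "norm (a - b + c) \<le> norm a + norm b + norm (c::'a::real_normed_vector)"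
  using norm_triangle_ineq[of "a - b" c] norm_triangle_ineq4[of a b] by linarith

lemma C11_deriv_lipschitz:
  assumes W: "subspace W" and f: "C11 W V f Df L N" and N: "0 \<le> N"
    and x: "x \<in> W" and y: "y \<in> W" and v: "v \<in> W"
  shows "norm (Df y v - Df x v) \<le> 6 * N * norm (y - x) * norm v"
proof (cases "y = x \<or> v = 0")
  case True
  then show ?thesis
    using linear_on_0[OF C11D(3)[OF f x] W] linear_on_0[OF C11D(3)[OF f y] W] by auto
next
  case False
  \<comment> \<open>Compare the three remainders along w, y - x and y - x + w, where norm w = norm (y - x).\<close>
  define \<rho> where "\<rho> = norm (y - x)"
  define c where "c = \<rho> / norm v"
  have \<rho>: "\<rho> > 0" and c: "c > 0" using False by (simp_all add: \<rho>_def c_def)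
  define w where "w = c *\<^sub>R v"
  have wW: "w \<in> W" and nw: "norm w = \<rho>" using W v c \<rho> False by (simp_all add: w_def c_def subspace_scale)
  have yx: "y - x \<in> W" and yxw: "y - x + w \<in> W" using W x y wW by (simp_all add: subspace_diff subspace_add)
  have "norm (y - x + w) \<le> 2 * \<rho>" using norm_triangle_ineq[of "y - x" w] nw \<rho>_def by simp
  then have "(norm (y - x + w))\<^sup>2 \<le> (2 * \<rho>)\<^sup>2" by (rule power_mono) simp
  then have "N * (norm (y - x + w))\<^sup>2 \<le> N * (2 * \<rho>)\<^sup>2" using N by (rule mult_left_mono)
  then have E3: "norm (f (x + (y - x + w)) - f x - Df x (y - x + w)) \<le> N * (2 * \<rho>)\<^sup>2"
    using C11D(6)[OF f x yxw] by linarith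
  have E1: "norm (f (y + w) - f y - Df y w) \<le> N * \<rho>\<^sup>2" using C11D(6)[OF f y wW] nw by simp
  have E4: "norm (f (x + (y - x)) - f x - Df x (y - x)) \<le> N * \<rho>\<^sup>2" using C11D(6)[OF f x yx] \<rho>_def by simp
  have "Df x w - Df y w = (f (y + w) - f y - Df y w) - (f (x + (y - x + w)) - f x - Df x (y - x + w))
      + (f (x + (y - x)) - f x - Df x (y - x))"
    using linear_onD(1)[OF C11D(3)[OF f x] yx wW] by (simp add: algebra_simps)
  then have "norm (Df x w - Df y w) \<le> N * \<rho>\<^sup>2 + N * (2 * \<rho>)\<^sup>2 + N * \<rho>\<^sup>2"
    using norm_diff_add_le E1 E3 E4 by (smt (verit))
  also have "\<dots> = c * (6 * N * \<rho> * norm v)" using False by (simp add: c_def power2_eq_square algebra_simps)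
  finally have "c * norm (Df y v - Df x v) \<le> c * (6 * N * \<rho> * norm v)"
    using linear_onD(2)[OF C11D(3)[OF f x] v] linear_onD(2)[OF C11D(3)[OF f y] v] c
    by (simp add: w_def norm_minus_commute flip: scaleR_diff_right)
  then show ?thesis using c by (simp add: \<rho>_def)
qed

lemma C11_deriv_Cauchy:
  assumes W: "subspace W" and f: "\<And>k. C11 W V (f k) (Df k) L N" and N: "0 \<le> N"
    and uc: "uniformly_Cauchy_on W f" and x: "x \<in> W" and h: "h \<in> W"
  shows "Cauchy (\<lambda>k. Df k x h)"
  unfolding Cauchy_def
proof (intro allI impI)
  fix e :: real assume e: "e > 0"
  \<comment> \<open>Difference quotients at a scale s small enough that the remainders contribute at most e / 2.\<close>
  define s where "s = e / (8 * (N * (norm h)\<^sup>2 + 1))"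
  have Np: "N * (norm h)\<^sup>2 + 1 > 0" using N by (simp add: add_nonneg_pos)
  have s: "s > 0" unfolding s_def using e Np by simp
  obtain K where K: "\<And>x m k. x \<in> W \<Longrightarrow> K \<le> m \<Longrightarrow> K \<le> k \<Longrightarrow> norm (f m x - f k x) < e * s / 8"
    using uc e s unfolding uniformly_Cauchy_on_def dist_norm by (meson mult_pos_pos zero_less_divide_iff zero_less_numeral)
  show "\<exists>M. \<forall>m\<ge>M. \<forall>n\<ge>M. dist (Df m x h) (Df n x h) < e"
  proof (intro exI[of _ K] allI impI)
    fix m k assume m: "K \<le> m" and k: "K \<le> k"
    have sh: "s *\<^sub>R h \<in> W" and xsh: "x + s *\<^sub>R h \<in> W" using W x h by (simp_all add: subspace_scale subspace_add)
    have R: "norm (f j (x + s *\<^sub>R h) - f j x - Df j x (s *\<^sub>R h)) \<le> N * (s * norm h)\<^sup>2" for j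
      using C11D(6)[OF f x sh] s by simp
    define y where "y = x + s *\<^sub>R h"
    have "s *\<^sub>R (Df m x h - Df k x h) = ((f m y - f k y) - (f m x - f k x))
      - (f m y - f m x - Df m x (s *\<^sub>R h)) + (f k y - f k x - Df k x (s *\<^sub>R h))"
      using linear_onD(2)[OF C11D(3)[OF f x] h, where c=s] by (simp add: y_def algebra_simps)
    then have "s * norm (Df m x h - Df k x h) \<le> norm ((f m y - f k y) - (f m x - f k x))
      + norm (f m y - f m x - Df m x (s *\<^sub>R h)) + norm (f k y - f k x - Df k x (s *\<^sub>R h))"
      using norm_diff_add_le s by (metis abs_of_pos norm_scaleR)
    also have "\<dots> \<le> (e * s / 8 + e * s / 8) + N * (s * norm h)\<^sup>2 + N * (s * norm h)\<^sup>2"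
      using K[OF xsh m k] K[OF x m k] norm_triangle_ineq4[of "f m y - f k y" "f m x - f k x"] R[of m] R[of k]
      unfolding y_def by linarith
    also have "\<dots> = s * (e / 4 + 2 * N * s * (norm h)\<^sup>2)" by (simp add: power2_eq_square algebra_simps)
    finally have "norm (Df m x h - Df k x h) \<le> e / 4 + 2 * N * s * (norm h)\<^sup>2"
      using s by (meson mult_left_le_imp_le)
    also have "2 * N * s * (norm h)\<^sup>2 \<le> 2 * (N * (norm h)\<^sup>2 + 1) * s" using s by (simp add: algebra_simps)
    also have "\<dots> = e / 4" unfolding s_def using Np by (simp add: field_simps)
    finally show "dist (Df m x h) (Df k x h) < e" using e by (simp add: dist_norm)
  qed
qed

lemma C11_pointwise_limit:
  assumes W: "subspace W" and V: "closed V"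
    and fk: "\<And>k. C11 W V (f k) (Df k) L N"
    and fl: "\<And>x. x \<in> W \<Longrightarrow> (\<lambda>k. f k x) \<longlonglongrightarrow> F x"
    and dl: "\<And>x h. x \<in> W \<Longrightarrow> h \<in> W \<Longrightarrow> (\<lambda>k. Df k x h) \<longlonglongrightarrow> D x h"
  shows "C11 W V F D L N"
proof (rule C11I)
  fix x assume x: "x \<in> W"
  show "F x \<in> V" by (rule closed_sequentially[OF V _ fl[OF x]]) (rule C11D(1)[OF fk x])
  show "linear_on W (D x)"
    unfolding linear_on_def
  proof (intro conjI ballI allI)
    fix a b assume a: "a \<in> W" and b: "b \<in> W"
    have "(\<lambda>k. Df k x (a + b)) \<longlonglongrightarrow> D x a + D x b"
      using tendsto_add[OF dl[OF x a] dl[OF x b]] linear_onD(1)[OF C11D(3)[OF fk x] a b] by simp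
    then show "D x (a + b) = D x a + D x b"
      using LIMSEQ_unique[OF dl[OF x]] W a b by (simp add: subspace_add)
  next
    fix c a assume a: "a \<in> W"
    have "(\<lambda>k. Df k x (c *\<^sub>R a)) \<longlonglongrightarrow> c *\<^sub>R D x a"
      using tendsto_scaleR[OF tendsto_const dl[OF x a]] linear_onD(2)[OF C11D(3)[OF fk x] a] by simp
    then show "D x (c *\<^sub>R a) = c *\<^sub>R D x a"
      using LIMSEQ_unique[OF dl[OF x]] W a by (simp add: subspace_scale)
  qed
  fix h assume h: "h \<in> W"
  show "D x h \<in> V" by (rule closed_sequentially[OF V _ dl[OF x h]]) (rule C11D(2)[OF fk x h])
  show "norm (D x h) \<le> L * norm h"
    by (rule LIMSEQ_le_const2[OF tendsto_norm[OF dl[OF x h]]]) (use C11D(4)[OF fk x h] in auto)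
  have xh: "x + h \<in> W" using W x h by (simp add: subspace_add)
  have "(\<lambda>k. f k (x + h) - f k x - Df k x h) \<longlonglongrightarrow> F (x + h) - F x - D x h"
    by (intro tendsto_intros fl dl x h xh)
  then show "norm (F (x + h) - F x - D x h) \<le> N * (norm h)\<^sup>2"
    by (rule LIMSEQ_le_const2[OF tendsto_norm]) (use C11D(6)[OF fk x h] in auto)
next
  fix x z assume x: "x \<in> W" and z: "z \<in> W"
  have "(\<lambda>k. f k z - f k x) \<longlonglongrightarrow> F z - F x" by (intro tendsto_intros fl x z)
  then show "norm (F z - F x) \<le> L * norm (z - x)"
    by (rule LIMSEQ_le_const2[OF tendsto_norm]) (use C11D(5)[OF fk x z] in auto)
qed

lemma geometric_tail_bound:
  fixes F :: "nat \<Rightarrow> 'a::real_normed_vector"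
  assumes step: "\<And>k. norm (F (Suc k) - F k) \<le> c * q ^ k" and c: "0 \<le> c" and q: "0 \<le> q" "q < 1"
    and km: "k \<le> m"
  shows "norm (F m - F k) \<le> c * q ^ k / (1 - q)"
proof -
  have tail: "norm (F (k + j) - F k) \<le> c * q ^ k * (1 - q ^ j) / (1 - q)" for j
  proof (induction j)
    case (Suc j)
    have "norm (F (k + Suc j) - F k) = norm ((F (Suc (k + j)) - F (k + j)) + (F (k + j) - F k))" by simp
    also have "\<dots> \<le> c * q ^ (k + j) + c * q ^ k * (1 - q ^ j) / (1 - q)"
      by (rule norm_triangle_mono[OF step Suc.IH])
    also have "\<dots> = c * q ^ k * (1 - q ^ Suc j) / (1 - q)" using q by (simp add: field_simps power_add)
    finally show ?case .
  qed simp
  obtain j where m: "m = k + j" using le_Suc_ex[OF km] by blast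
  have "c * q ^ k * (1 - q ^ j) / (1 - q) \<le> c * q ^ k / (1 - q)"
    using c q by (simp add: divide_right_mono mult_left_le)
  then show ?thesis using tail[of j] m by simp
qed

lemma uniformly_Cauchy_on_geometric:
  assumes step: "\<And>k x. x \<in> W \<Longrightarrow> norm (f (Suc k) x - f k x) \<le> c * q ^ k"
    and c: "0 \<le> c" and q: "0 \<le> q" "q < 1"
  shows "uniformly_Cauchy_on W f"
proof (rule uniformly_Cauchy_onI)
  fix e :: real assume "e > 0"
  have "(\<lambda>k. 2 * (c * q ^ k / (1 - q))) \<longlonglongrightarrow> 2 * (c * 0 / (1 - q))"
    by (intro tendsto_intros LIMSEQ_power_zero) (use q in auto)
  then have "(\<lambda>k. 2 * (c * q ^ k / (1 - q))) \<longlonglongrightarrow> 0" by simp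
  from order_tendstoD(2)[OF this \<open>e > 0\<close>] obtain M where M: "2 * (c * q ^ M / (1 - q)) < e"
    unfolding eventually_sequentially by blast
  have "dist (f m x) (f n x) < e" if "x \<in> W" "M \<le> m" "M \<le> n" for x m n
  proof -
    have "dist (f m x) (f n x) \<le> norm (f m x - f M x) + norm (f n x - f M x)"
      using dist_triangle2[of "f m x" "f n x" "f M x"] by (simp add: dist_norm)
    also have "\<dots> \<le> c * q ^ M / (1 - q) + c * q ^ M / (1 - q)"
      using geometric_tail_bound[where F="\<lambda>k. f k x", OF step[OF \<open>x \<in> W\<close>] c q] that by (intro add_mono)
    finally show ?thesis using M by simp
  qed
  then show "\<exists>M. \<forall>x\<in>W. \<forall>m\<ge>M. \<forall>n\<ge>M. dist (f m x) (f n x) < e" by blast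
qed

lemma eq_of_approximations:
  fixes y z :: "'a::real_normed_vector"
  assumes "\<And>k. norm (y - F (Suc k)) \<le> q * c k" "\<And>k. norm (z - F k) \<le> c k" "c \<longlonglongrightarrow> 0"
  shows "y = z"
proof -
  have "norm (y - z) \<le> q * c k + c (Suc k)" for k
    using norm_diff_triangle_le[OF assms(1)[of k] assms(2)[of "Suc k", unfolded norm_minus_commute[of z]]] .
  moreover have "(\<lambda>k. q * c k + c (Suc k)) \<longlonglongrightarrow> q * 0 + 0"
    by (intro tendsto_intros assms(3) LIMSEQ_Suc)
  ultimately have "norm (y - z) \<le> 0" by (intro LIMSEQ_le_const) auto
  then show ?thesis by simp
qed

definition C11_flat :: "'a::real_normed_vector set \<Rightarrow> 'b::real_normed_vector set \<Rightarrow> real \<Rightarrow> real \<Rightarrow> real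
    \<Rightarrow> ('a \<Rightarrow> 'b) \<Rightarrow> bool" where
  "C11_flat W V L N B f \<longleftrightarrow>
     (\<exists>Df. C11 W V f Df L N \<and> (\<forall>h\<in>W. Df 0 h = 0)) \<and> f 0 = 0 \<and> (\<forall>x\<in>W. norm (f x) \<le> B)"

lemma C11_flatD:
  assumes "C11_flat W V L N B f"
  obtains Df where "C11 W V f Df L N" "\<And>h. h \<in> W \<Longrightarrow> Df 0 h = 0" "f 0 = 0" "\<And>x. x \<in> W \<Longrightarrow> norm (f x) \<le> B"
  using assms unfolding C11_flat_def by metis

lemma C11_flat_geometric_limit:
  fixes f :: "nat \<Rightarrow> 'a::real_normed_vector \<Rightarrow> 'b::banach"
  assumes W: "subspace W" and V: "closed V" and fk: "\<And>k. C11_flat W V L N B (f k)" and N: "0 \<le> N"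
    and step: "\<And>k x. x \<in> W \<Longrightarrow> norm (f (Suc k) x - f k x) \<le> c * q ^ k"
    and c: "0 \<le> c" and q: "0 \<le> q" "q < 1"
  shows "C11_flat W V L N B (\<lambda>x. lim (\<lambda>k. f k x))"
    and "\<And>x k. x \<in> W \<Longrightarrow> norm (lim (\<lambda>k. f k x) - f k x) \<le> c * q ^ k / (1 - q)"
proof -
  have uc: "uniformly_Cauchy_on W f" by (rule uniformly_Cauchy_on_geometric[OF step c q])
  have conv: "(\<lambda>k. f k x) \<longlonglongrightarrow> lim (\<lambda>k. f k x)" if "x \<in> W" for x
    using uniformly_Cauchy_imp_Cauchy[OF uc that] by (simp add: Cauchy_convergent_iff convergent_LIMSEQ_iff)
  obtain Df where Df: "\<And>k. C11 W V (f k) (Df k) L N" "\<And>k h. h \<in> W \<Longrightarrow> Df k 0 h = 0"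
    using fk unfolding C11_flat_def by metis
  define D where "D x h = lim (\<lambda>k. Df k x h)" for x h
  have Dconv: "(\<lambda>k. Df k x h) \<longlonglongrightarrow> D x h" if "x \<in> W" "h \<in> W" for x h
    using C11_deriv_Cauchy[OF W Df(1) N uc that] by (simp add: D_def Cauchy_convergent_iff convergent_LIMSEQ_iff)
  have "C11 W V (\<lambda>x. lim (\<lambda>k. f k x)) D L N"
    by (rule C11_pointwise_limit[OF W V Df(1) conv Dconv])
  moreover have "D 0 h = 0" if "h \<in> W" for h
    using LIMSEQ_unique[OF Dconv[OF subspace_0[OF W] that]] Df(2)[OF that] by simp
  moreover have "lim (\<lambda>k. f k 0) = 0"
    using LIMSEQ_unique[OF conv[OF subspace_0[OF W]]] fk by (simp add: C11_flat_def)
  moreover have "norm (lim (\<lambda>k. f k x)) \<le> B" if "x \<in> W" for x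
    by (rule LIMSEQ_le_const2[OF tendsto_norm[OF conv[OF that]]]) (use fk that in \<open>auto simp: C11_flat_def\<close>)
  ultimately show "C11_flat W V L N B (\<lambda>x. lim (\<lambda>k. f k x))" unfolding C11_flat_def by blast
  show "norm (lim (\<lambda>k. f k x) - f k x) \<le> c * q ^ k / (1 - q)" if "x \<in> W" for x k
    by (rule LIMSEQ_le_const2[OF tendsto_norm[OF tendsto_diff[OF conv[OF that] tendsto_const]]])
       (use geometric_tail_bound[where F="\<lambda>k. f k x", OF step[OF that] c q] in auto)
qed

section \<open>Bounded derivative families\<close>

definition jet1 :: "('a \<Rightarrow> 'b) \<Rightarrow> ('a \<Rightarrow> 'a \<Rightarrow> 'b) \<Rightarrow> nat \<Rightarrow> 'a \<Rightarrow> 'a list \<Rightarrow> 'b" where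
  "jet1 f Df j y vs = (if j = 0 then f y else Df y (hd vs))"

lemma ml_bound_0: "ml_bound S 0 phi L \<longleftrightarrow> norm (phi []) \<le> L"
  unfolding ml_bound_def by auto

lemma ml_bound_1: "ml_bound S (Suc 0) phi L \<longleftrightarrow> (\<forall>v\<in>S. norm (phi [v]) \<le> L * norm v)"
  unfolding ml_bound_def by (auto simp: length_Suc_conv)

lemma ml_bound_2D: "ml_bound S 2 phi L \<Longrightarrow> u \<in> S \<Longrightarrow> v \<in> S \<Longrightarrow> norm (phi [u, v]) \<le> L * norm u * norm v"
  unfolding ml_bound_def by (erule allE[of _ "[u, v]"]) (auto simp: mult.assoc)

lemma mlinear_on_1I: "linear_on S (\<lambda>v. phi [v]) \<Longrightarrow> mlinear_on S (Suc 0) phi"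
  unfolding mlinear_on_def linear_on_def by (auto simp: length_Suc_conv)

lemma mlinear_on_1D: "mlinear_on S (Suc 0) phi \<Longrightarrow> linear_on S (\<lambda>v. phi [v])"
  unfolding mlinear_on_def linear_on_def by (metis list.set(1,2) list_update_code(2) empty_subsetI insert_subset
    length_Cons list.size(3) zero_less_Suc)

lemma mlinear_on_2D: "mlinear_on S 2 phi \<Longrightarrow> v \<in> S \<Longrightarrow> linear_on S (\<lambda>u. phi [u, v])"
  unfolding mlinear_on_def linear_on_def
  by (intro conjI ballI allI) (drule spec[of _ 0], simp, drule spec[of _ "[v, v]"], simp)+

lemma C11_remainder_small:
  assumes f: "C11 W V f Df L N" and N: "0 \<le> N" and y: "y \<in> W" and e: "e > 0"
  shows "\<exists>d>0. \<forall>h\<in>W. norm h < d \<longrightarrow> norm (f (y + h) - f y - Df y h) \<le> e * norm h"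
proof (intro exI[of _ "e / (N + 1)"] conjI ballI impI)
  show "e / (N + 1) > 0" using e N by simp
  fix h assume "h \<in> W" "norm h < e / (N + 1)"
  then have "N * norm h \<le> e" using N by (simp add: field_simps) (smt (verit) mult_left_mono norm_ge_zero)
  then have "N * (norm h)\<^sup>2 \<le> e * norm h" by (simp add: power2_eq_square mult_right_mono mult.assoc[symmetric])
  then show "norm (f (y + h) - f y - Df y h) \<le> e * norm h" using C11D(6)[OF f y \<open>h \<in> W\<close>] by linarith
qed

lemma C11_deriv_continuous:
  assumes W: "subspace W" and f: "C11 W V f Df L N" and N: "0 \<le> N" and y: "y \<in> W" and e: "e > 0"
  shows "\<exists>d>0. \<forall>z\<in>W. norm (z - y) < d \<longrightarrow> (\<forall>v\<in>W. norm (Df z v - Df y v) \<le> e * norm v)"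
proof (intro exI[of _ "e / (6 * N + 1)"] conjI ballI impI)
  show "e / (6 * N + 1) > 0" using e N by simp
  fix z v assume "z \<in> W" "norm (z - y) < e / (6 * N + 1)" "v \<in> W"
  moreover from this have "6 * N * norm (z - y) \<le> e"
    using N by (simp add: field_simps) (smt (verit) mult_left_mono norm_ge_zero)
  ultimately show "norm (Df z v - Df y v) \<le> e * norm v"
    using C11_deriv_lipschitz[OF W f N y] by (meson mult_right_mono norm_ge_zero order_trans)
qed

lemma C11_imp_Ckb1:
  assumes W: "subspace W" and f: "C11 W V f Df L N" and N: "0 \<le> N"
    and B: "\<And>x. x \<in> W \<Longrightarrow> norm (f x) \<le> B"
  shows "Ckb 1 W V f (jet1 f Df)"
  unfolding Ckb_def
proof (intro conjI)
  show "\<forall>y\<in>W. f y \<in> V \<and> jet1 f Df 0 y [] = f y" using C11D(1)[OF f] by (simp add: jet1_def)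
  show "\<forall>j\<le>1. \<forall>y\<in>W. mlinear_on W j (jet1 f Df j y) \<and>
      (\<forall>vs. length vs = j \<and> set vs \<subseteq> W \<longrightarrow> jet1 f Df j y vs \<in> V)"
  proof (intro allI impI ballI conjI)
    fix j y assume "j \<le> (1::nat)" "y \<in> W"
    then have j: "j = 0 \<or> j = Suc 0" by auto
    show "mlinear_on W j (jet1 f Df j y)"
      using j mlinear_on_1I[of W "jet1 f Df 1 y"] C11D(3)[OF f \<open>y \<in> W\<close>]
      by (auto simp: mlinear_on_def jet1_def)
    fix vs assume "length vs = j \<and> set vs \<subseteq> W"
    then show "jet1 f Df j y vs \<in> V"
      using j C11D(1,2)[OF f \<open>y \<in> W\<close>] by (auto simp: jet1_def length_Suc_conv)
  qed
  show "\<forall>j\<le>1. \<exists>B. \<forall>y\<in>W. ml_bound W j (jet1 f Df j y) B"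
    using B C11D(4)[OF f] by (auto simp: le_Suc_eq jet1_def ml_bound_0 ml_bound_1)
  show "\<forall>j<1. \<forall>y\<in>W. \<forall>e>0. \<exists>d>0. \<forall>h\<in>W. norm h < d \<longrightarrow>
      ml_bound W j (\<lambda>vs. jet1 f Df j (y + h) vs - jet1 f Df j y vs - jet1 f Df (Suc j) y (h # vs)) (e * norm h)"
    using C11_remainder_small[OF f N] by (simp add: jet1_def ml_bound_0)
  show "\<forall>y\<in>W. \<forall>e>0. \<exists>d>0. \<forall>z\<in>W. norm (z - y) < d \<longrightarrow> ml_bound W 1 (\<lambda>vs. jet1 f Df 1 z vs - jet1 f Df 1 y vs) e"
    using C11_deriv_continuous[OF W f N] by (simp add: jet1_def ml_bound_1)
qed

lemma CkbD:
  assumes "Ckb k S T f D" "y \<in> S"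
  shows "D 0 y [] = f y" "f y \<in> T" "j \<le> k \<Longrightarrow> mlinear_on S j (D j y)"
    "j \<le> k \<Longrightarrow> length vs = j \<Longrightarrow> set vs \<subseteq> S \<Longrightarrow> D j y vs \<in> T"
proof -
  from assms(1) have "\<forall>y\<in>S. f y \<in> T \<and> D 0 y [] = f y" unfolding Ckb_def by (elim conjE)
  moreover from assms(1) have "\<forall>j\<le>k. \<forall>y\<in>S. mlinear_on S j (D j y) \<and>
      (\<forall>vs. length vs = j \<and> set vs \<subseteq> S \<longrightarrow> D j y vs \<in> T)"
    unfolding Ckb_def by (elim conjE)
  ultimately show "D 0 y [] = f y" "f y \<in> T" "j \<le> k \<Longrightarrow> mlinear_on S j (D j y)"
    "j \<le> k \<Longrightarrow> length vs = j \<Longrightarrow> set vs \<subseteq> S \<Longrightarrow> D j y vs \<in> T"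
    using assms(2) by blast+
qed

lemma Ckb_remainder:
  assumes "Ckb k S T f D" "j < k" "y \<in> S" "e > 0"
  shows "\<exists>d>0. \<forall>h\<in>S. norm h < d \<longrightarrow>
           ml_bound S j (\<lambda>vs. D j (y + h) vs - D j y vs - D (Suc j) y (h # vs)) (e * norm h)"
proof -
  from assms(1) have "\<forall>j<k. \<forall>y\<in>S. \<forall>e>0. \<exists>d>0. \<forall>h\<in>S. norm h < d \<longrightarrow>
      ml_bound S j (\<lambda>vs. D j (y + h) vs - D j y vs - D (Suc j) y (h # vs)) (e * norm h)"
    unfolding Ckb_def by (elim conjE)
  then show ?thesis using assms(2-4) by blast
qed

lemma Ckb_bounded: "Ckb k S T f D \<Longrightarrow> \<exists>B. \<forall>y\<in>S. norm (f y) \<le> B"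
  unfolding Ckb_def by (metis ml_bound_0 zero_le)

lemma has_derivative_within_subspaceI:
  assumes S: "subspace S" and y: "y \<in> S" and l: "bounded_linear l"
    and approx: "\<And>e. e > 0 \<Longrightarrow> \<exists>d>0. \<forall>h\<in>S. norm h < d \<longrightarrow> norm (f (y + h) - f y - l h) \<le> e * norm h"
  shows "(f has_derivative l) (at y within S)"
  unfolding has_derivative_within'
proof (intro conjI l allI impI)
  fix e :: real assume e: "e > 0"
  obtain d where d: "d > 0" "\<forall>h\<in>S. norm h < d \<longrightarrow> norm (f (y + h) - f y - l h) \<le> e/2 * norm h"
    using approx[of "e/2"] e by auto
  show "\<exists>d>0. \<forall>x'\<in>S. 0 < norm (x' - y) \<and> norm (x' - y) < d \<longrightarrow> norm (f x' - f y - l (x' - y)) / norm (x' - y) < e"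
  proof (intro exI[of _ d] conjI d(1) ballI impI)
    fix x' assume x': "x' \<in> S" "0 < norm (x' - y) \<and> norm (x' - y) < d"
    then have "norm (f x' - f y - l (x' - y)) \<le> e/2 * norm (x' - y)"
      using d(2) S y by (metis add.commute diff_add_cancel subspace_diff)
    also have "\<dots> < e * norm (x' - y)" using x' e by simp
    finally show "norm (f x' - f y - l (x' - y)) / norm (x' - y) < e"
      using x' by (simp add: divide_less_eq)
  qed
qed

definition contractive_projection :: "'a::real_normed_vector set \<Rightarrow> ('a \<Rightarrow> 'a) \<Rightarrow> bool" where
  "contractive_projection S P \<longleftrightarrow>
     bounded_linear P \<and> (\<forall>x. P x \<in> S) \<and> (\<forall>x\<in>S. P x = x) \<and> (\<forall>x. norm (P x) \<le> norm x)"

lemma contractive_projection_id: "contractive_projection UNIV (\<lambda>x. x)"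
  by (simp add: contractive_projection_def bounded_linear_ident)

lemma bounded_linear_projection_comp:
  assumes P: "contractive_projection S P" and l: "linear_on S l"
    and B: "0 \<le> B" "\<And>h. h \<in> S \<Longrightarrow> norm (l h) \<le> B * norm h"
  shows "bounded_linear (\<lambda>k. l (P k))" "\<And>k. norm (l (P k)) \<le> B * norm k"
proof -
  have PS: "P k \<in> S" "norm (P k) \<le> norm k" for k using P by (auto simp: contractive_projection_def)
  interpret P: bounded_linear P using P by (simp add: contractive_projection_def)
  show bound: "norm (l (P k)) \<le> B * norm k" for k
    using B(2)[OF PS(1)] mult_left_mono[OF PS(2) B(1)] by (rule order_trans)
  show "bounded_linear (\<lambda>k. l (P k))"
    by (rule bounded_linear_intro[where K=B])
       (simp_all add: P.add P.scale linear_onD[OF l] PS(1) bound mult.commute)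
qed

lemma Ckb_has_derivative:
  assumes S: "subspace S" and P: "contractive_projection S P" and f: "Ckb n S T f D" and n: "1 \<le> n"
    and L: "0 \<le> L" "\<And>y. y \<in> S \<Longrightarrow> ml_bound S 1 (D 1 y) L" and z: "z \<in> S"
  shows "(f has_derivative (\<lambda>k. D 1 z [P k])) (at z within S)"
proof (rule has_derivative_within_subspaceI[OF S z])
  have lin: "linear_on S (\<lambda>h. D 1 z [h])" using mlinear_on_1D CkbD(3)[OF f z n] by simp
  show "bounded_linear (\<lambda>k. D 1 z [P k])"
    by (rule bounded_linear_projection_comp(1)[OF P lin L(1)]) (use L(2)[OF z] in \<open>simp add: ml_bound_1\<close>)
  fix e :: real assume "e > 0"
  then obtain d where "d > 0" "\<forall>h\<in>S. norm h < d \<longrightarrow> norm (D 0 (z + h) [] - D 0 z [] - D 1 z [h]) \<le> e * norm h"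
    using Ckb_remainder[OF f _ z, of 0] n by (auto simp: ml_bound_0)
  then show "\<exists>d>0. \<forall>h\<in>S. norm h < d \<longrightarrow> norm (f (z + h) - f z - D 1 z [P h]) \<le> e * norm h"
    using P CkbD(1)[OF f] S z by (auto simp: contractive_projection_def subspace_add)
qed

lemma Ckb_deriv_has_derivative:
  assumes S: "subspace S" and P: "contractive_projection S P" and f: "Ckb n S T f D" and n: "2 \<le> n"
    and \<epsilon>: "0 \<le> \<epsilon>" "\<And>y. y \<in> S \<Longrightarrow> ml_bound S 2 (D 2 y) \<epsilon>" and y: "y \<in> S" and v: "v \<in> S"
  shows "((\<lambda>y. D 1 y [v]) has_derivative (\<lambda>k. D 2 y [P k, v])) (at y within S)"
proof (rule has_derivative_within_subspaceI[OF S y])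
  have lin: "linear_on S (\<lambda>u. D 2 y [u, v])" using mlinear_on_2D[OF CkbD(3)[OF f y n] v] .
  show "bounded_linear (\<lambda>k. D 2 y [P k, v])"
    by (rule bounded_linear_projection_comp(1)[OF P lin, of "\<epsilon> * norm v"])
       (use \<epsilon>(1) ml_bound_2D[OF \<epsilon>(2)[OF y] _ v] in \<open>simp_all add: mult_ac\<close>)
  fix e :: real assume e: "e > 0"
  define e' where "e' = e / (norm v + 1)"
  have "e' > 0" "e' * norm v \<le> e" using e by (simp_all add: e'_def field_simps add_pos_nonneg)
  obtain d where "d > 0" and d: "\<forall>h\<in>S. norm h < d \<longrightarrow> ml_bound S 1 (\<lambda>vs. D 1 (y + h) vs - D 1 y vs - D 2 y (h # vs)) (e' * norm h)"
    using Ckb_remainder[OF f _ y \<open>e' > 0\<close>, of 1] n by (auto simp: numeral_2_eq_2)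
  have "norm (D 1 (y + h) [v] - D 1 y [v] - D 2 y [P h, v]) \<le> e * norm h" if "h \<in> S" "norm h < d" for h
  proof -
    have "norm (D 1 (y + h) [v] - D 1 y [v] - D 2 y [h, v]) \<le> e' * norm h * norm v"
      using d that v by (simp add: ml_bound_1)
    also have "\<dots> \<le> e * norm h" using mult_right_mono[OF \<open>e' * norm v \<le> e\<close> norm_ge_zero[of h]] by (simp add: mult_ac)
    finally show ?thesis using P that by (simp add: contractive_projection_def)
  qed
  then show "\<exists>d>0. \<forall>h\<in>S. norm h < d \<longrightarrow> norm (D 1 (y + h) [v] - D 1 y [v] - D 2 y [P h, v]) \<le> e * norm h"
    using \<open>d > 0\<close> by blast
qed

lemma Ckb_deriv_lipschitz:
  assumes S: "subspace S" and P: "contractive_projection S P" and f: "Ckb n S T f D" and n: "2 \<le> n"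
    and \<epsilon>: "0 \<le> \<epsilon>" "\<And>y. y \<in> S \<Longrightarrow> ml_bound S 2 (D 2 y) \<epsilon>" and x: "x \<in> S" and z: "z \<in> S"
  shows "norm (D 1 z [P k] - D 1 x [P k]) \<le> \<epsilon> * norm (z - x) * norm k"
proof -
  have PS: "P k \<in> S" "norm (P k) \<le> norm k" for k using P by (auto simp: contractive_projection_def)
  have "norm (D 1 z [P k] - D 1 x [P k]) \<le> (\<epsilon> * norm (P k)) * norm (z - x)"
  proof (rule differentiable_bound[OF subspace_imp_convex[OF S] Ckb_deriv_has_derivative[OF S P f n \<epsilon> _ PS(1)] _ z x])
    fix y assume y: "y \<in> S"
    show "onorm (\<lambda>u. D 2 y [P u, P k]) \<le> \<epsilon> * norm (P k)"
    proof (rule onorm_bound)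
      show "0 \<le> \<epsilon> * norm (P k)" using \<epsilon>(1) by simp
      fix u
      have "norm (D 2 y [P u, P k]) \<le> \<epsilon> * norm (P u) * norm (P k)"
        using ml_bound_2D[OF \<epsilon>(2)[OF y] PS(1) PS(1)] .
      also have "\<dots> \<le> \<epsilon> * norm u * norm (P k)"
        using PS(2)[of u] \<epsilon>(1) by (intro mult_right_mono mult_left_mono) simp_all
      finally show "norm (D 2 y [P u, P k]) \<le> \<epsilon> * norm (P k) * norm u" by (simp add: mult_ac)
    qed
  qed
  also have "\<dots> \<le> (\<epsilon> * norm k) * norm (z - x)"
    using PS(2)[of k] \<epsilon>(1) by (intro mult_right_mono mult_left_mono) simp_all
  finally show ?thesis by (simp add: mult_ac)
qed

lemma Ckb_taylor_bound:
  assumes S: "subspace S" and P: "contractive_projection S P" and f: "Ckb n S T f D" and n: "2 \<le> n"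
    and L: "0 \<le> L" "\<And>y. y \<in> S \<Longrightarrow> ml_bound S 1 (D 1 y) L"
    and \<epsilon>: "0 \<le> \<epsilon>" "\<And>y. y \<in> S \<Longrightarrow> ml_bound S 2 (D 2 y) \<epsilon>" and x: "x \<in> S" and h: "h \<in> S"
  shows "norm (f (x + h) - f x - D 1 x [h]) \<le> \<epsilon> * (norm h)\<^sup>2"
proof -
  define G where "G = (\<lambda>t. x + t *\<^sub>R h) ` {0..1}"
  have GS: "G \<subseteq> S" unfolding G_def using S x h by (auto simp: subspace_add subspace_scale)
  have "norm (f (x + h) - f x - D 1 x [P (x + h - x)]) \<le> norm (x + h - x) * (\<epsilon> * norm h)"
  proof (rule differentiable_bound_linearization[of x "x + h" G f "\<lambda>z k. D 1 z [P k]" x "\<epsilon> * norm h"])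
    show "x + t *\<^sub>R (x + h - x) \<in> G" if "t \<in> {0..1}" for t
      unfolding G_def by (rule image_eqI[where x=t]) (use that in auto)
    show "(f has_derivative (\<lambda>k. D 1 z [P k])) (at z within G)" if "z \<in> G" for z
      using that GS Ckb_has_derivative[OF S P f _ L, of z] n by (auto intro: has_derivative_subset)
    show "x \<in> G" unfolding G_def by (auto intro: image_eqI[of _ _ 0])
    fix z assume "z \<in> G"
    then obtain t where t: "t \<in> {0..1}" "z = x + t *\<^sub>R h" by (auto simp: G_def)
    then have zx: "norm (z - x) \<le> norm h" by (simp add: mult_left_le_one_le)
    show "onorm ((\<lambda>k. D 1 z [P k]) - (\<lambda>k. D 1 x [P k])) \<le> \<epsilon> * norm h"
    proof (rule onorm_bound)
      show "0 \<le> \<epsilon> * norm h" using \<epsilon>(1) by simp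
      fix k
      have "norm (D 1 z [P k] - D 1 x [P k]) \<le> \<epsilon> * norm (z - x) * norm k"
        using Ckb_deriv_lipschitz[OF S P f n \<epsilon> x, of z k] GS \<open>z \<in> G\<close> by blast
      also have "\<dots> \<le> \<epsilon> * norm h * norm k"
        using zx \<epsilon>(1) by (intro mult_right_mono mult_left_mono) simp_all
      finally show "norm (((\<lambda>k. D 1 z [P k]) - (\<lambda>k. D 1 x [P k])) k) \<le> \<epsilon> * norm h * norm k" by simp
    qed
  qed
  then show ?thesis using P h by (simp add: contractive_projection_def power2_eq_square mult_ac)
qed

lemma Ckb2_imp_C11:
  assumes S: "subspace S" and P: "contractive_projection S P" and f: "Ckb n S T f D" and n: "2 \<le> n"
    and L: "0 \<le> L" "\<And>y. y \<in> S \<Longrightarrow> ml_bound S 1 (D 1 y) L"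
    and \<epsilon>: "0 \<le> \<epsilon>" "\<And>y. y \<in> S \<Longrightarrow> ml_bound S 2 (D 2 y) \<epsilon>"
  shows "C11 S T f (\<lambda>y h. D 1 y [h]) L \<epsilon>"
proof (rule C11I)
  have lin1: "linear_on S (\<lambda>h. D 1 y [h])" if "y \<in> S" for y
    using mlinear_on_1D CkbD(3)[OF f that, of 1] n by simp
  fix x assume x: "x \<in> S"
  show "f x \<in> T" using CkbD(2)[OF f x] .
  show "linear_on S (\<lambda>h. D 1 x [h])" using lin1[OF x] .
  fix h assume h: "h \<in> S"
  show "D 1 x [h] \<in> T" using CkbD(4)[OF f x, of 1 "[h]"] h n by simp
  show "norm (D 1 x [h]) \<le> L * norm h" using L(2)[OF x] h by (simp add: ml_bound_1)
  show "norm (f (x + h) - f x - D 1 x [h]) \<le> \<epsilon> * (norm h)\<^sup>2" by (rule Ckb_taylor_bound[OF S P f n L \<epsilon> x h])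
next
  fix x z assume "x \<in> S" "z \<in> S"
  have n1: "1 \<le> n" using n by simp
  show "norm (f z - f x) \<le> L * norm (z - x)"
  proof (rule differentiable_bound[OF subspace_imp_convex[OF S] Ckb_has_derivative[OF S P f n1 L]
        _ \<open>z \<in> S\<close> \<open>x \<in> S\<close>])
    fix y assume y: "y \<in> S"
    have "linear_on S (\<lambda>h. D 1 y [h])" using mlinear_on_1D CkbD(3)[OF f y, of 1] n by simp
    then show "onorm (\<lambda>k. D 1 y [P k]) \<le> L"
      by (rule onorm_bound[OF L(1) bounded_linear_projection_comp(2)[OF P _ L(1)]])
         (use L(2)[OF y] in \<open>simp add: ml_bound_1\<close>)
  qed
qed

section \<open>The spectral splitting\<close>

locale cm_setting =
  fixes A :: "'a::banach \<Rightarrow> 'a" and Xc Xu Xs :: "'a set" and n :: nat and Lg Lc :: real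
  assumes n2: "n \<ge> 2"
    and subc: "subspace Xc" and subu: "subspace Xu" and subs: "subspace Xs"
    and clc: "closed Xc" and clu: "closed Xu" and cls: "closed Xs"
    and dsum: "\<forall>x. \<exists>!(c, u, s). c \<in> Xc \<and> u \<in> Xu \<and> s \<in> Xs \<and> x = c + u + s"
    and maxnorm: "\<forall>c\<in>Xc. \<forall>u\<in>Xu. \<forall>s\<in>Xs. norm (c + u + s) = max (norm c) (max (norm u) (norm s))"
    and A_lin: "bounded_linear A"
    and A_c: "A ` Xc \<subseteq> Xc" and A_u: "A ` Xu \<subseteq> Xu" and A_s: "A ` Xs \<subseteq> Xs"
    and Ac_bij: "bij_betw A Xc Xc" and Au_bij: "bij_betw A Xu Xu"
    and Lg0: "0 \<le> Lg" and Lc0: "0 \<le> Lc"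
    and SN: "SN_cond n (onorm_on Xc A) (onorm_on Xc (inv_into Xc A))
               (onorm_on Xu (inv_into Xu A)) (onorm_on Xs A) Lg Lc"
begin

sublocale A: bounded_linear A by (rule A_lin)

definition "dec x = (THE p. case p of (c, u, s) \<Rightarrow> c \<in> Xc \<and> u \<in> Xu \<and> s \<in> Xs \<and> x = c + u + s)"
definition "pc x = fst (dec x)"
definition "pu x = fst (snd (dec x))"
definition "ps x = snd (snd (dec x))"

lemma dec_unique:
  assumes "c \<in> Xc" "u \<in> Xu" "s \<in> Xs" "x = c + u + s"
  shows "pc x = c" "pu x = u" "ps x = s"
proof -
  have "dec x = (c, u, s)"
    unfolding dec_def by (rule the1_equality) (use dsum assms in auto)
  then show "pc x = c" "pu x = u" "ps x = s" by (simp_all add: pc_def pu_def ps_def)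
qed

lemma pc_in: "pc x \<in> Xc" and pu_in: "pu x \<in> Xu" and ps_in: "ps x \<in> Xs"
  and p_sum: "pc x + pu x + ps x = x"
proof -
  have "case dec x of (c, u, s) \<Rightarrow> c \<in> Xc \<and> u \<in> Xu \<and> s \<in> Xs \<and> x = c + u + s"
    unfolding dec_def by (rule theI') (use dsum in blast)
  then show "pc x \<in> Xc" "pu x \<in> Xu" "ps x \<in> Xs" "pc x + pu x + ps x = x"
    unfolding pc_def pu_def ps_def by (auto split: prod.splits)
qed

lemma zero_in: "0 \<in> Xc" "0 \<in> Xu" "0 \<in> Xs"
  using subc subu subs subspace_0 by auto

lemma norm_c_u_s: "c \<in> Xc \<Longrightarrow> u \<in> Xu \<Longrightarrow> s \<in> Xs \<Longrightarrow> norm (c + u + s) = max (norm c) (max (norm u) (norm s))"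
  using maxnorm by blast

lemma norm_pc: "norm (pc x) \<le> norm x" and norm_pu: "norm (pu x) \<le> norm x" and norm_ps: "norm (ps x) \<le> norm x"
  using norm_c_u_s[OF pc_in pu_in ps_in, of x x x] p_sum[of x] by (metis max.cobounded1 max.cobounded2 order_trans)+

lemma linear_on_pc: "linear_on UNIV pc" and linear_on_pu: "linear_on UNIV pu" and linear_on_ps: "linear_on UNIV ps"
proof -
  have "(pc x + pu x + ps x) + (pc y + pu y + ps y) = (pc x + pc y) + (pu x + pu y) + (ps x + ps y)" for x y
    by (simp add: algebra_simps)
  then have "x + y = (pc x + pc y) + (pu x + pu y) + (ps x + ps y)" for x y
    by (simp only: p_sum)
  from dec_unique[OF subspace_add[OF subc pc_in pc_in] subspace_add[OF subu pu_in pu_in]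
      subspace_add[OF subs ps_in ps_in] this]
  have add: "pc (x + y) = pc x + pc y" "pu (x + y) = pu x + pu y" "ps (x + y) = ps x + ps y" for x y
    by blast+
  have "r *\<^sub>R x = r *\<^sub>R pc x + r *\<^sub>R pu x + r *\<^sub>R ps x" for r x
    using p_sum[of x] by (metis scaleR_add_right)
  from dec_unique[OF subspace_scale[OF subc pc_in] subspace_scale[OF subu pu_in]
      subspace_scale[OF subs ps_in] this]
  have scale: "pc (r *\<^sub>R x) = r *\<^sub>R pc x" "pu (r *\<^sub>R x) = r *\<^sub>R pu x" "ps (r *\<^sub>R x) = r *\<^sub>R ps x" for r x
    by blast+
  show "linear_on UNIV pc" "linear_on UNIV pu" "linear_on UNIV ps"
    by (simp_all add: linear_on_def add scale)
qed

lemma p_diff: "pc (a - b) = pc a - pc b" "pu (a - b) = pu a - pu b" "ps (a - b) = ps a - ps b"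
  using linear_on_diff[OF linear_on_pc] linear_on_diff[OF linear_on_pu] linear_on_diff[OF linear_on_ps]
  by auto

lemma p_zero: "pc 0 = 0" "pu 0 = 0" "ps 0 = 0"
  using linear_on_0[OF linear_on_pc subspace_UNIV] linear_on_0[OF linear_on_pu subspace_UNIV]
    linear_on_0[OF linear_on_ps subspace_UNIV] by auto

lemma pc_projection: "contractive_projection Xc pc"
proof -
  have "pc x = x" if "x \<in> Xc" for x using dec_unique(1)[OF that zero_in(2,3), of x] by simp
  moreover have "bounded_linear pc"
    using linear_onD[OF linear_on_pc] by (intro bounded_linear_intro[where K=1]) (auto simp: norm_pc)
  ultimately show ?thesis using pc_in norm_pc by (simp add: contractive_projection_def)
qed

lemma linear_on_A: "linear_on W A"
  by (simp add: linear_on_def A.add A.scale)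

definition "ac = onorm_on Xc A"
definition "asn = onorm_on Xs A"
definition "Aci = inv_into Xc A"
definition "Aui = inv_into Xu A"
definition "aci = onorm_on Xc Aci"
definition "aui = onorm_on Xu Aui"

lemma A_bound: "x \<in> Xc \<Longrightarrow> norm (A x) \<le> ac * norm x" "x \<in> Xs \<Longrightarrow> norm (A x) \<le> asn * norm x"
  and ac_nonneg: "0 \<le> ac" and asn_nonneg: "0 \<le> asn"
proof -
  obtain K where "K > 0" "\<And>x. norm (A x) \<le> norm x * K" using A.pos_bounded by blast
  then have "0 \<le> K" "\<And>x. norm (A x) \<le> K * norm x" by (simp_all add: mult.commute)
  then show "x \<in> Xc \<Longrightarrow> norm (A x) \<le> ac * norm x" "0 \<le> ac"
    "x \<in> Xs \<Longrightarrow> norm (A x) \<le> asn * norm x" "0 \<le> asn"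
    unfolding ac_def asn_def using onorm_on_bound[of K] by blast+
qed

lemma Aci: "x \<in> Xc \<Longrightarrow> Aci x \<in> Xc" "x \<in> Xc \<Longrightarrow> A (Aci x) = x" "x \<in> Xc \<Longrightarrow> Aci (A x) = x"
  unfolding Aci_def using Ac_bij by (auto simp: bij_betw_def inv_into_into f_inv_into_f inv_into_f_f)

lemma Aui: "x \<in> Xu \<Longrightarrow> Aui x \<in> Xu" "x \<in> Xu \<Longrightarrow> A (Aui x) = x"
  unfolding Aui_def using Au_bij by (auto simp: bij_betw_def inv_into_into f_inv_into_f)

lemma linear_on_Aci: "linear_on Xc Aci" and linear_on_Aui: "linear_on Xu Aui"
  unfolding Aci_def Aui_def using linear_on_inv_into subc subu Ac_bij Au_bij linear_on_A by auto

lemma Aci_0: "Aci 0 = 0" and Aui_0: "Aui 0 = 0"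
  using linear_on_0[OF linear_on_Aci subc] linear_on_0[OF linear_on_Aui subu] .

lemma Aci_bound: "x \<in> Xc \<Longrightarrow> norm (Aci x) \<le> aci * norm x" and aci_nonneg: "0 \<le> aci"
proof -
  obtain C where "C > 0" "\<And>y. y \<in> Xc \<Longrightarrow> norm (inv_into Xc A y) \<le> C * norm y"
    using bounded_inverse_on[OF subc clc A_lin Ac_bij] by metis
  then show "x \<in> Xc \<Longrightarrow> norm (Aci x) \<le> aci * norm x" "0 \<le> aci"
    unfolding aci_def Aci_def using onorm_on_bound[of C Xc "inv_into Xc A"] by auto
qed

lemma Aui_bound: "x \<in> Xu \<Longrightarrow> norm (Aui x) \<le> aui * norm x" and aui_nonneg: "0 \<le> aui"
proof -
  obtain C where "C > 0" "\<And>y. y \<in> Xu \<Longrightarrow> norm (inv_into Xu A y) \<le> C * norm y"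
    using bounded_inverse_on[OF subu clu A_lin Au_bij] by metis
  then show "x \<in> Xu \<Longrightarrow> norm (Aui x) \<le> aui * norm x" "0 \<le> aui"
    unfolding aui_def Aui_def using onorm_on_bound[of C Xu "inv_into Xu A"] by auto
qed

definition "Lr = cLr ac Lg Lc"
definition "Lt = cLt aci Lr"
definition "Lu = cLu ac aui Lr Lg Lc"
definition "Ls = cLs aci asn Lr Lg Lc"
definition "Lm1 = aci + Lt"

lemma S2_bounds:
  "Lc < 1" "Lr * aci < 1" "Lr * aui + ac * aui < 1" "Lr * aci + asn * aci < 1"
  "\<And>m. m \<le> 2 \<Longrightarrow> Lg + Lc < 1"
  "\<And>m. m \<le> 2 \<Longrightarrow> aui * ((ac + Lr)^m + Lg + Lu) < 1"
  "\<And>m. m \<le> 2 \<Longrightarrow> Lm1^m * (asn * (1 + Lm1 * Ls) + Lg * (1 + Lm1 * (1 + Lc))) < 1"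
  using SN n2 unfolding SN_cond_def Let_def Lr_def Lt_def Lu_def Ls_def Lm1_def ac_def aci_def aui_def asn_def Aci_def Aui_def
  by auto

text \<open>
  Each of \<open>Lr\<close>, \<open>Lt\<close>, \<open>Lu\<close>, \<open>Ls\<close> solves the linear equation saying that the corresponding
  component of the graph transform reproduces its derivative bound.
\<close>

lemma Lr_nonneg: "0 \<le> Lr" and Lr_eq: "Lr = ac * Lc + Lg * (1 + Lc) + Lc * (ac + Lr)"
proof -
  have d: "1 - Lc > 0" using S2_bounds(1) by simp
  show "0 \<le> Lr" unfolding Lr_def cLr_def using d Lg0 Lc0 ac_nonneg by simp
  have "Lr * (1 - Lc) = Lg + Lc * (2 * ac + Lg)" unfolding Lr_def cLr_def using d by simp
  then show "Lr = ac * Lc + Lg * (1 + Lc) + Lc * (ac + Lr)" by (simp add: algebra_simps)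
qed

lemma Lt_nonneg: "0 \<le> Lt" and Lm1_eq: "Lm1 * (1 - aci * Lr) = aci" and Lt_eq: "Lt = aci * (Lr * Lm1)"
  and Lm1_nonneg: "0 \<le> Lm1"
proof -
  have d: "1 - aci * Lr > 0" using S2_bounds(2) by (simp add: mult.commute)
  show t0: "0 \<le> Lt" unfolding Lt_def cLt_def using d Lr_nonneg aci_nonneg by simp
  have "Lt * (1 - aci * Lr) = aci^2 * Lr" unfolding Lt_def cLt_def using d by simp
  then show m: "Lm1 * (1 - aci * Lr) = aci" unfolding Lm1_def by (simp add: algebra_simps power2_eq_square)
  have "Lm1 = aci / (1 - aci * Lr)" using m d by (simp add: field_simps)
  then show "Lt = aci * (Lr * Lm1)" unfolding Lt_def cLt_def using d by (simp add: power2_eq_square)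
  show "0 \<le> Lm1" unfolding Lm1_def using t0 aci_nonneg by simp
qed

lemma Lu_nonneg: "0 \<le> Lu" and Lu_eq: "Lu = aui * (Lu * (ac + Lr) + Lg * (1 + Lc))" and Lu_le: "Lu \<le> 1 + Lc"
proof -
  define D where "D = 1 - Lr * aui - ac * aui"
  have d: "D > 0" using S2_bounds(3) by (simp add: D_def)
  have eq: "Lu * D = aui * (1 + Lc) * Lg" unfolding Lu_def cLu_def D_def using d by (simp add: D_def)
  show u0: "0 \<le> Lu" unfolding Lu_def cLu_def using d aui_nonneg Lg0 Lc0 by (simp add: D_def)
  show "Lu = aui * (Lu * (ac + Lr) + Lg * (1 + Lc))" using eq by (simp add: D_def algebra_simps)
  have "aui * ((ac + Lr)^1 + Lg + Lu) < 1" using S2_bounds(6)[of 1] by simp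
  then have "aui * Lg \<le> D" using u0 aui_nonneg by (simp add: D_def algebra_simps)
    (smt (verit) mult_nonneg_nonneg)
  then have "Lu * D \<le> (1 + Lc) * D" using eq Lc0 by (simp add: mult.commute mult.left_commute mult_left_mono)
  then show "Lu \<le> 1 + Lc" using d by simp
qed

lemma Ls_nonneg: "0 \<le> Ls" and Ls_eq: "Ls = (asn * Ls + Lg * (1 + Lc)) * Lm1" and Ls_le: "Ls \<le> 1 + Lc"
proof -
  define D where "D = 1 - Lr * aci - asn * aci"
  have d: "D > 0" using S2_bounds(4) by (simp add: D_def)
  have eq: "Ls * D = aci * (1 + Lc) * Lg" unfolding Ls_def cLs_def D_def using d by (simp add: D_def)
  show s0: "0 \<le> Ls" unfolding Ls_def cLs_def using d aci_nonneg Lg0 Lc0 by (simp add: D_def)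
  have d1: "1 - aci * Lr > 0" using S2_bounds(2) by (simp add: mult.commute)
  have "Ls * (1 - aci * Lr) = (asn * Ls + Lg * (1 + Lc)) * aci" using eq by (simp add: D_def algebra_simps)
  also have "\<dots> = ((asn * Ls + Lg * (1 + Lc)) * Lm1) * (1 - aci * Lr)"
    using Lm1_eq by (simp only: mult.assoc)
  finally show "Ls = (asn * Ls + Lg * (1 + Lc)) * Lm1" using d1 by simp
  have "Lm1 * (asn * (1 + Lm1 * Ls) + Lg * (1 + Lm1 * (1 + Lc))) < 1" using S2_bounds(7)[of 1] by simp
  moreover have "0 \<le> Lm1 * asn * Lm1 * Ls" "0 \<le> Lm1 * Lg * Lm1 * (1 + Lc)"
    using s0 Lm1_nonneg asn_nonneg Lg0 Lc0 by simp_all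
  ultimately have "Lm1 * (asn + Lg) < 1" by (simp add: algebra_simps)
  then have "(Lm1 * (1 - aci * Lr)) * (asn + Lg) < 1 - aci * Lr"
    using d1 by (simp add: mult.commute mult.left_commute)
  then have "aci * Lg \<le> D" unfolding Lm1_eq D_def using asn_nonneg aci_nonneg by (simp add: algebra_simps)
  then have "Ls * D \<le> (1 + Lc) * D" using eq Lc0 by (simp add: mult.commute mult.left_commute mult_left_mono)
  then show "Ls \<le> 1 + Lc" using d by simp
qed

lemma aui_lt_1: "aui < 1" and asn_lt_1: "asn < 1"
proof -
  have "aui * (1 + Lg + Lu) < 1" using S2_bounds(6)[of 0] by simp
  then show "aui < 1" using aui_nonneg Lg0 Lu_nonneg by (simp add: algebra_simps) (smt (verit) mult_nonneg_nonneg)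
  have "asn * (1 + Lm1 * Ls) + Lg * (1 + Lm1 * (1 + Lc)) < 1" using S2_bounds(7)[of 0] by simp
  then show "asn < 1" using asn_nonneg Lg0 Lc0 Ls_nonneg Lm1_nonneg
    by (simp add: algebra_simps) (smt (verit) mult_nonneg_nonneg)
qed

lemma norm_components_le:
  assumes "a \<in> Xc" "b \<in> Xu" "c \<in> Xs" "norm a \<le> M1 * t" "norm b \<le> M2 * t" "norm c \<le> M3 * t" "0 \<le> t"
  shows "norm (a + b + c) \<le> max M1 (max M2 M3) * t"
proof -
  have "M1 * t \<le> max M1 (max M2 M3) * t" "M2 * t \<le> max M1 (max M2 M3) * t" "M3 * t \<le> max M1 (max M2 M3) * t"
    using assms(7) by (simp_all add: mult_right_mono)
  then show ?thesis using assms norm_c_u_s by simp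
qed

lemma C11_sum_components:
  assumes W: "subspace W"
    and f1: "C11 W Xc f1 D1 L1 N1" and f2: "C11 W Xu f2 D2 L2 N2" and f3: "C11 W Xs f3 D3 L3 N3"
  shows "C11 W UNIV (\<lambda>x. f1 x + f2 x + f3 x) (\<lambda>x h. D1 x h + D2 x h + D3 x h)
           (max L1 (max L2 L3)) (max N1 (max N2 N3))"
proof (rule C11I)
  fix x assume x: "x \<in> W"
  show "linear_on W (\<lambda>h. D1 x h + D2 x h + D3 x h)"
    unfolding linear_on_def using linear_onD[OF C11D(3)[OF f1 x]] linear_onD[OF C11D(3)[OF f2 x]]
      linear_onD[OF C11D(3)[OF f3 x]]
    by (simp add: algebra_simps scaleR_add_right)
  fix h assume h: "h \<in> W"
  show "norm (D1 x h + D2 x h + D3 x h) \<le> max L1 (max L2 L3) * norm h"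
    by (rule norm_components_le[OF C11D(2)[OF f1 x h] C11D(2)[OF f2 x h] C11D(2)[OF f3 x h]
          C11D(4)[OF f1 x h] C11D(4)[OF f2 x h] C11D(4)[OF f3 x h]]) simp
  have xh: "x + h \<in> W" using W x h by (simp add: subspace_add)
  have e: "f1 (x + h) + f2 (x + h) + f3 (x + h) - (f1 x + f2 x + f3 x) - (D1 x h + D2 x h + D3 x h)
     = (f1 (x + h) - f1 x - D1 x h) + (f2 (x + h) - f2 x - D2 x h) + (f3 (x + h) - f3 x - D3 x h)"
    by (simp add: algebra_simps)
  have "f1 (x + h) - f1 x - D1 x h \<in> Xc" "f2 (x + h) - f2 x - D2 x h \<in> Xu" "f3 (x + h) - f3 x - D3 x h \<in> Xs"
    using C11D(1,2)[OF f1] C11D(1,2)[OF f2] C11D(1,2)[OF f3] x h xh subc subu subs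
    by (simp_all add: subspace_diff)
  then show "norm (f1 (x + h) + f2 (x + h) + f3 (x + h) - (f1 x + f2 x + f3 x) - (D1 x h + D2 x h + D3 x h))
      \<le> max N1 (max N2 N3) * (norm h)\<^sup>2"
    unfolding e by (rule norm_components_le[OF _ _ _ C11D(6)[OF f1 x h] C11D(6)[OF f2 x h] C11D(6)[OF f3 x h] zero_le_power2])
next
  fix x z assume x: "x \<in> W" and z: "z \<in> W"
  have e: "f1 z + f2 z + f3 z - (f1 x + f2 x + f3 x) = (f1 z - f1 x) + (f2 z - f2 x) + (f3 z - f3 x)"
    by (simp add: algebra_simps)
  have "f1 z - f1 x \<in> Xc" "f2 z - f2 x \<in> Xu" "f3 z - f3 x \<in> Xs"
    using C11D(1)[OF f1] C11D(1)[OF f2] C11D(1)[OF f3] x z subc subu subs by (simp_all add: subspace_diff)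
  then show "norm (f1 z + f2 z + f3 z - (f1 x + f2 x + f3 x)) \<le> max L1 (max L2 L3) * norm (z - x)"
    unfolding e by (rule norm_components_le[OF _ _ _ C11D(5)[OF f1 x z] C11D(5)[OF f2 x z] C11D(5)[OF f3 x z] norm_ge_zero])
qed simp_all

end

section \<open>The graph transform\<close>

locale cm_data = cm_setting +
  fixes g :: "'a \<Rightarrow> 'a" and G :: "'a \<Rightarrow> 'a \<Rightarrow> 'a" and kc :: "'a \<Rightarrow> 'a" and KC :: "'a \<Rightarrow> 'a \<Rightarrow> 'a"
    and Ng Nk Bg Bk :: real
  assumes g_C11: "C11 UNIV UNIV g G Lg Ng" and kc_C11: "C11 Xc Xc kc KC Lc Nk"
    and g0: "g 0 = 0" and G0: "\<And>v. G 0 v = 0" and kc0: "kc 0 = 0" and KC0: "\<And>v. v \<in> Xc \<Longrightarrow> KC 0 v = 0"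
    and Bg: "\<And>x. norm (g x) \<le> Bg" and Bk: "\<And>x. x \<in> Xc \<Longrightarrow> norm (kc x) \<le> Bk"
    and Ng0: "0 \<le> Ng" and Nk0: "0 \<le> Nk"
begin

definition "K u s x = x + kc x + u x + s x"
definition "DK Du Ds x h = h + KC x h + Du x h + Ds x h"

text \<open>
  \<open>mu\<close> bounds the Taylor remainders of \<open>r\<close>, \<open>u\<close>, \<open>s\<close> and \<open>Nt\<close> that of \<open>t\<close>.  Each summand of \<open>mu\<close>
  pays for one inequality of \<open>mu_bounds\<close>; the denominators are positive because the
  conditions \<open>(S_2)\<close> include \<open>\<theta>\<^sub>2\<^sub>,\<^sub>i < 1\<close>.
\<close>
definition "Cg = Ng * (1 + Lc)\<^sup>2"
definition "Cr = ac * Nk + Cg + Nk * (ac + Lr)\<^sup>2"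
definition "th2u = aui * ((ac + Lr)^2 + Lg + Lu)"
definition "th2s = Lm1^2 * (asn * (1 + Lm1 * Ls) + Lg * (1 + Lm1 * (1 + Lc)))"
definition "mu = Nk + Cr / (1 - Lg - Lc) + aui * Cg / (1 - th2u) + Cg * Lm1\<^sup>2 / (1 - th2s) + 1"
definition "Nt = mu * Lm1 ^ 3"

lemma mu_bounds: "Nk \<le> mu" "0 \<le> mu" "Cr \<le> (1 - Lg - Lc) * mu" "aui * Cg \<le> (1 - th2u) * mu"
  "Cg * Lm1\<^sup>2 \<le> (1 - th2s) * mu"
proof -
  have d1: "1 - Lg - Lc > 0" using S2_bounds(5)[of "0::nat"] by simp
  have d2: "1 - th2u > 0" using S2_bounds(6)[of 2] by (simp add: th2u_def)
  have d3: "1 - th2s > 0" using S2_bounds(7)[of 2] by (simp add: th2s_def)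
  have cg: "0 \<le> Cg" unfolding Cg_def using Ng0 by simp
  have cr: "0 \<le> Cr" unfolding Cr_def using Nk0 cg ac_nonneg by simp
  have t1: "0 \<le> Cr / (1 - Lg - Lc)" using cr d1 by simp
  have t2: "0 \<le> aui * Cg / (1 - th2u)" using cg d2 aui_nonneg by simp
  have t3: "0 \<le> Cg * Lm1\<^sup>2 / (1 - th2s)" using cg d3 by simp
  show "Nk \<le> mu" "0 \<le> mu" unfolding mu_def using t1 t2 t3 Nk0 by linarith+
  have "Cr / (1 - Lg - Lc) \<le> mu" unfolding mu_def using t2 t3 Nk0 by linarith
  then show "Cr \<le> (1 - Lg - Lc) * mu" using d1 by (simp add: divide_le_eq mult.commute)
  have "aui * Cg / (1 - th2u) \<le> mu" unfolding mu_def using t1 t3 Nk0 by linarith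
  then show "aui * Cg \<le> (1 - th2u) * mu" using d2 by (simp add: divide_le_eq mult.commute)
  have "Cg * Lm1\<^sup>2 / (1 - th2s) \<le> mu" unfolding mu_def using t1 t2 Nk0 by linarith
  then show "Cg * Lm1\<^sup>2 \<le> (1 - th2s) * mu" using d3 by (simp add: divide_le_eq mult.commute)
qed

lemma Nt_nonneg: "0 \<le> Nt"
  unfolding Nt_def using mu_bounds(2) Lm1_nonneg by simp

lemma C11_K:
  assumes u: "C11 Xc Xu u Du Lu mu" and s: "C11 Xc Xs s Ds Ls mu"
  shows "C11 Xc UNIV (K u s) (DK Du Ds) (1 + Lc) mu"
proof -
  have "C11 Xc Xc (\<lambda>x. x + kc x) (\<lambda>x h. h + KC x h) (1 + Lc) (0 + Nk)"
    using C11_add[OF subc C11_id kc_C11] .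
  from C11_sum_components[OF subc this u s]
  have "C11 Xc UNIV (K u s) (DK Du Ds) (max (1 + Lc) (max Lu Ls)) (max (0 + Nk) (max mu mu))"
    unfolding K_def[abs_def] DK_def[abs_def] .
  then show ?thesis
    by (rule C11_mono) (use Lu_le Ls_le mu_bounds(1) in auto)
qed

text \<open>
  The \<open>Xc\<close>-, \<open>Xu\<close>- and \<open>Xs\<close>-components of \<open>F (K x) = K (A x + r x)\<close> are
  solved for \<open>r\<close>, for \<open>u\<close> through \<open>Aui\<close>, and for \<open>s\<close> at the preimage \<open>Aci x + t x\<close> of \<open>x\<close>
  under \<open>A + r\<close>; the equation for \<open>t\<close> expresses that preimage.
\<close>
definition "stepR r u s x = A (kc x) + pc (g (K u s x)) - kc (A x + r x)"
definition "stepT r t x = - Aci (r (Aci x + t x))"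
definition "stepU r u s x = Aui (u (A x + r x) - pu (g (K u s x)))"
definition "stepS t u s x = A (s (Aci x + t x)) + ps (g (K u s (Aci x + t x)))"

definition "DstepR r Dr u Du s Ds x h =
  A (KC x h) + pc (G (K u s x) (DK Du Ds x h)) - KC (A x + r x) (A h + Dr x h)"
definition "DstepT Dr t Dt x h = - Aci (Dr (Aci x + t x) (Aci h + Dt x h))"
definition "DstepU r Dr u Du s Ds x h =
  Aui (Du (A x + r x) (A h + Dr x h) - pu (G (K u s x) (DK Du Ds x h)))"
definition "DstepS t Dt u Du s Ds x h =
  A (Ds (Aci x + t x) (Aci h + Dt x h)) + ps (G (K u s (Aci x + t x)) (DK Du Ds (Aci x + t x) (Aci h + Dt x h)))"

lemma C11_A: "C11 Xc Xc A (\<lambda>x h. A h) ac 0"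
  by (rule C11_linear_map[OF subc linear_on_A]) (use A_c A_bound ac_nonneg in auto)

lemma C11_Aci: "C11 Xc Xc Aci (\<lambda>x h. Aci h) aci 0"
  by (rule C11_linear_map[OF subc linear_on_Aci]) (use Aci Aci_bound aci_nonneg in auto)

lemma C11_A_plus:
  assumes "C11 Xc Xc r Dr Lr mu"
  shows "C11 Xc Xc (\<lambda>x. A x + r x) (\<lambda>x h. A h + Dr x h) (ac + Lr) (0 + mu)"
  using C11_add[OF subc C11_A assms] .

lemma C11_Aci_plus:
  assumes "C11 Xc Xc t Dt Lt Nt"
  shows "C11 Xc Xc (\<lambda>x. Aci x + t x) (\<lambda>x h. Aci h + Dt x h) Lm1 (0 + Nt)"
  using C11_add[OF subc C11_Aci assms] unfolding Lm1_def .

lemma C11_g_K: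
  assumes "C11 Xc Xu u Du Lu mu" "C11 Xc Xs s Ds Ls mu"
  shows "C11 Xc UNIV (\<lambda>x. g (K u s x)) (\<lambda>x h. G (K u s x) (DK Du Ds x h)) (Lg * (1 + Lc)) (Ng * (1 + Lc)\<^sup>2 + Lg * mu)"
  using C11_comp[OF subc subspace_UNIV g_C11 C11_K[OF assms]] Lg0 Ng0 by simp

lemma C11_pc: "C11 Xc UNIV f Df L N \<Longrightarrow> C11 Xc Xc (\<lambda>x. pc (f x)) (\<lambda>x h. pc (Df x h)) (1 * L) (1 * N)"
  by (rule C11_linear[OF subc subspace_UNIV linear_on_pc]) (auto simp: pc_in norm_pc)

lemma C11_pu: "C11 Xc UNIV f Df L N \<Longrightarrow> C11 Xc Xu (\<lambda>x. pu (f x)) (\<lambda>x h. pu (Df x h)) (1 * L) (1 * N)"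
  by (rule C11_linear[OF subc subspace_UNIV linear_on_pu]) (auto simp: pu_in norm_pu)

lemma C11_ps: "C11 Xc UNIV f Df L N \<Longrightarrow> C11 Xc Xs (\<lambda>x. ps (f x)) (\<lambda>x h. ps (Df x h)) (1 * L) (1 * N)"
  by (rule C11_linear[OF subc subspace_UNIV linear_on_ps]) (auto simp: ps_in norm_ps)

lemma stepR_C11:
  assumes r: "C11 Xc Xc r Dr Lr mu" and u: "C11 Xc Xu u Du Lu mu" and s: "C11 Xc Xs s Ds Ls mu"
  shows "C11 Xc Xc (stepR r u s) (DstepR r Dr u Du s Ds) Lr mu"
proof -
  have "C11 Xc Xc (\<lambda>x. A (kc x)) (\<lambda>x h. A (KC x h)) (ac * Lc) (ac * Nk)"
    by (rule C11_linear[OF subc subc linear_on_A _ _ _ kc_C11]) (use A_c A_bound ac_nonneg in auto)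
  moreover note C11_pc[OF C11_g_K[OF u s]]
  moreover have "C11 Xc Xc (\<lambda>x. kc (A x + r x)) (\<lambda>x h. KC (A x + r x) (A h + Dr x h))
      (Lc * (ac + Lr)) (Nk * (ac + Lr)\<^sup>2 + Lc * (0 + mu))"
    using C11_comp[OF subc subc kc_C11 C11_A_plus[OF r]] Lc0 Nk0 by simp
  ultimately have "C11 Xc Xc (stepR r u s) (DstepR r Dr u Du s Ds)
      (ac * Lc + 1 * (Lg * (1 + Lc)) + Lc * (ac + Lr))
      (ac * Nk + 1 * (Ng * (1 + Lc)\<^sup>2 + Lg * mu) + (Nk * (ac + Lr)\<^sup>2 + Lc * (0 + mu)))"
    unfolding stepR_def[abs_def] DstepR_def[abs_def] by (intro C11_diff[OF subc subc] C11_add[OF subc])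
  then show ?thesis
  proof (rule C11_mono)
    show "ac * Lc + 1 * (Lg * (1 + Lc)) + Lc * (ac + Lr) \<le> Lr" using Lr_eq by simp
    have "ac * Nk + 1 * (Ng * (1 + Lc)\<^sup>2 + Lg * mu) + (Nk * (ac + Lr)\<^sup>2 + Lc * (0 + mu)) = Cr + (Lg + Lc) * mu"
      unfolding Cr_def Cg_def by (simp add: algebra_simps)
    then show "ac * Nk + 1 * (Ng * (1 + Lc)\<^sup>2 + Lg * mu) + (Nk * (ac + Lr)\<^sup>2 + Lc * (0 + mu)) \<le> mu"
      using mu_bounds(3) by (simp add: algebra_simps)
  qed
qed

lemma stepT_C11:
  assumes r: "C11 Xc Xc r Dr Lr mu" and t: "C11 Xc Xc t Dt Lt Nt"
  shows "C11 Xc Xc (stepT r t) (DstepT Dr t Dt) Lt Nt"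
proof -
  have c: "C11 Xc Xc (\<lambda>x. r (Aci x + t x)) (\<lambda>x h. Dr (Aci x + t x) (Aci h + Dt x h))
      (Lr * Lm1) (mu * Lm1\<^sup>2 + Lr * (0 + Nt))"
    using C11_comp[OF subc subc r C11_Aci_plus[OF t]] Lr_nonneg mu_bounds(2) by simp
  have "C11 Xc Xc (stepT r t) (DstepT Dr t Dt) (aci * (Lr * Lm1)) (aci * (mu * Lm1\<^sup>2 + Lr * (0 + Nt)))"
    unfolding stepT_def[abs_def] DstepT_def[abs_def]
    by (rule C11_linear[OF subc subc _ _ _ aci_nonneg c])
       (auto simp: linear_on_def linear_onD[OF linear_on_Aci] Aci Aci_bound subspace_neg[OF subc])
  then show ?thesis
  proof (rule C11_mono)
    show "aci * (Lr * Lm1) \<le> Lt" using Lt_eq by simp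
    have "aci * (mu * Lm1\<^sup>2 + Lr * (0 + Nt)) = mu * Lm1\<^sup>2 * (aci + aci * Lr * Lm1)"
      unfolding Nt_def by (simp add: power2_eq_square power3_eq_cube algebra_simps)
    also have "aci + aci * Lr * Lm1 = Lm1" using Lm1_eq by (simp add: algebra_simps)
    finally show "aci * (mu * Lm1\<^sup>2 + Lr * (0 + Nt)) \<le> Nt"
      by (simp add: Nt_def power2_eq_square power3_eq_cube)
  qed
qed

lemma stepU_C11:
  assumes r: "C11 Xc Xc r Dr Lr mu" and u: "C11 Xc Xu u Du Lu mu" and s: "C11 Xc Xs s Ds Ls mu"
  shows "C11 Xc Xu (stepU r u s) (DstepU r Dr u Du s Ds) Lu mu"
proof -
  have "C11 Xc Xu (\<lambda>x. u (A x + r x)) (\<lambda>x h. Du (A x + r x) (A h + Dr x h))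
      (Lu * (ac + Lr)) (mu * (ac + Lr)\<^sup>2 + Lu * (0 + mu))"
    using C11_comp[OF subc subc u C11_A_plus[OF r]] Lu_nonneg mu_bounds(2) by simp
  note c = C11_diff[OF subc subu this C11_pu[OF C11_g_K[OF u s]]]
  have "C11 Xc Xu (stepU r u s) (DstepU r Dr u Du s Ds)
      (aui * (Lu * (ac + Lr) + 1 * (Lg * (1 + Lc))))
      (aui * (mu * (ac + Lr)\<^sup>2 + Lu * (0 + mu) + 1 * (Ng * (1 + Lc)\<^sup>2 + Lg * mu)))"
    unfolding stepU_def[abs_def] DstepU_def[abs_def]
    by (rule C11_linear[OF subc subu linear_on_Aui Aui(1) Aui_bound aui_nonneg c])
  then show ?thesis
  proof (rule C11_mono)
    show "aui * (Lu * (ac + Lr) + 1 * (Lg * (1 + Lc))) \<le> Lu" using Lu_eq by (simp add: algebra_simps)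
    have "aui * (mu * (ac + Lr)\<^sup>2 + Lu * (0 + mu) + 1 * (Ng * (1 + Lc)\<^sup>2 + Lg * mu)) = th2u * mu + aui * Cg"
      unfolding th2u_def Cg_def by (simp add: algebra_simps)
    then show "aui * (mu * (ac + Lr)\<^sup>2 + Lu * (0 + mu) + 1 * (Ng * (1 + Lc)\<^sup>2 + Lg * mu)) \<le> mu"
      using mu_bounds(4) by (simp add: algebra_simps)
  qed
qed

lemma stepS_C11:
  assumes t: "C11 Xc Xc t Dt Lt Nt" and u: "C11 Xc Xu u Du Lu mu" and s: "C11 Xc Xs s Ds Ls mu"
  shows "C11 Xc Xs (stepS t u s) (DstepS t Dt u Du s Ds) Ls mu"
proof -
  have c: "C11 Xc Xs (\<lambda>x. s (Aci x + t x)) (\<lambda>x h. Ds (Aci x + t x) (Aci h + Dt x h))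
      (Ls * Lm1) (mu * Lm1\<^sup>2 + Ls * (0 + Nt))"
    using C11_comp[OF subc subc s C11_Aci_plus[OF t]] Ls_nonneg mu_bounds(2) by simp
  have "C11 Xc Xs (\<lambda>x. A (s (Aci x + t x))) (\<lambda>x h. A (Ds (Aci x + t x) (Aci h + Dt x h)))
      (asn * (Ls * Lm1)) (asn * (mu * Lm1\<^sup>2 + Ls * (0 + Nt)))"
    by (rule C11_linear[OF subc subs linear_on_A _ _ asn_nonneg c]) (use A_s A_bound in auto)
  moreover have "C11 Xc UNIV (\<lambda>x. g (K u s (Aci x + t x)))
      (\<lambda>x h. G (K u s (Aci x + t x)) (DK Du Ds (Aci x + t x) (Aci h + Dt x h)))
      (Lg * (1 + Lc) * Lm1) ((Ng * (1 + Lc)\<^sup>2 + Lg * mu) * Lm1\<^sup>2 + Lg * (1 + Lc) * (0 + Nt))"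
    using C11_comp[OF subc subc C11_g_K[OF u s] C11_Aci_plus[OF t]] Lg0 Lc0 Ng0 mu_bounds(2) by simp
  ultimately have "C11 Xc Xs (stepS t u s) (DstepS t Dt u Du s Ds)
      (asn * (Ls * Lm1) + 1 * (Lg * (1 + Lc) * Lm1))
      (asn * (mu * Lm1\<^sup>2 + Ls * (0 + Nt)) + 1 * ((Ng * (1 + Lc)\<^sup>2 + Lg * mu) * Lm1\<^sup>2 + Lg * (1 + Lc) * (0 + Nt)))"
    unfolding stepS_def[abs_def] DstepS_def[abs_def] by (intro C11_add[OF subs] C11_ps)
  then show ?thesis
  proof (rule C11_mono)
    show "asn * (Ls * Lm1) + 1 * (Lg * (1 + Lc) * Lm1) \<le> Ls" using Ls_eq by (simp add: algebra_simps)
    have "asn * (mu * Lm1\<^sup>2 + Ls * (0 + Nt)) + 1 * ((Ng * (1 + Lc)\<^sup>2 + Lg * mu) * Lm1\<^sup>2 + Lg * (1 + Lc) * (0 + Nt))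
       = th2s * mu + Cg * Lm1\<^sup>2"
      unfolding th2s_def Cg_def Nt_def by (simp add: power2_eq_square power3_eq_cube algebra_simps)
    then show "asn * (mu * Lm1\<^sup>2 + Ls * (0 + Nt)) + 1 * ((Ng * (1 + Lc)\<^sup>2 + Lg * mu) * Lm1\<^sup>2 + Lg * (1 + Lc) * (0 + Nt)) \<le> mu"
      using mu_bounds(5) by (simp add: algebra_simps)
  qed
qed

definition "Br = ac * Bk + Bg + Bk"
definition "Bt = aci * Br"
definition "Bu = aui * Bg / (1 - aui)"
definition "Bs = Bg / (1 - asn)"

lemma Bg_nonneg: "0 \<le> Bg" and Bk_nonneg: "0 \<le> Bk"
  using Bg[of 0] Bk[OF zero_in(1)] norm_ge_zero order_trans by blast+

lemma Bu_eq: "aui * (Bu + Bg) = Bu" and Bs_eq: "asn * Bs + Bg = Bs"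
  using aui_lt_1 asn_lt_1 by (simp_all add: Bu_def Bs_def field_simps)

lemma B_nonneg: "0 \<le> Br" "0 \<le> Bt" "0 \<le> Bu" "0 \<le> Bs"
  using ac_nonneg aci_nonneg aui_nonneg aui_lt_1 asn_lt_1 Bg_nonneg Bk_nonneg
  by (simp_all add: Br_def Bt_def Bu_def Bs_def)

definition admissible :: "('a \<Rightarrow> 'a) \<Rightarrow> ('a \<Rightarrow> 'a) \<Rightarrow> ('a \<Rightarrow> 'a) \<Rightarrow> ('a \<Rightarrow> 'a) \<Rightarrow> bool" where
  "admissible r t u s \<longleftrightarrow> C11_flat Xc Xc Lr mu Br r \<and> C11_flat Xc Xc Lt Nt Bt t \<and>
     C11_flat Xc Xu Lu mu Bu u \<and> C11_flat Xc Xs Ls mu Bs s"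

lemma admissible_zero: "admissible (\<lambda>x. 0) (\<lambda>x. 0) (\<lambda>x. 0) (\<lambda>x. 0)"
  unfolding admissible_def C11_flat_def
  using C11_zero[where W=Xc] zero_in Lr_nonneg Lt_nonneg Lu_nonneg Ls_nonneg mu_bounds(2) Nt_nonneg B_nonneg
  by fastforce

lemma A_plus_in: "C11 Xc Xc r Dr L N \<Longrightarrow> x \<in> Xc \<Longrightarrow> A x + r x \<in> Xc"
  using subspace_add[OF subc _ C11D(1)] A_c by blast

lemma Aci_plus_in: "C11 Xc Xc t Dt L N \<Longrightarrow> x \<in> Xc \<Longrightarrow> Aci x + t x \<in> Xc"
  using subspace_add[OF subc Aci(1) C11D(1)] by blast

lemma admissibleE:
  assumes "admissible r t u s"
  obtains Dr Dt Du Ds where "C11 Xc Xc r Dr Lr mu" "C11 Xc Xc t Dt Lt Nt" "C11 Xc Xu u Du Lu mu"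
    "C11 Xc Xs s Ds Ls mu" "\<And>h. h \<in> Xc \<Longrightarrow> Dr 0 h = 0 \<and> Dt 0 h = 0 \<and> Du 0 h = 0 \<and> Ds 0 h = 0"
    "r 0 = 0" "t 0 = 0" "u 0 = 0" "s 0 = 0"
    "\<And>x. x \<in> Xc \<Longrightarrow> norm (r x) \<le> Br \<and> norm (t x) \<le> Bt \<and> norm (u x) \<le> Bu \<and> norm (s x) \<le> Bs"
proof -
  have f: "C11_flat Xc Xc Lr mu Br r" "C11_flat Xc Xc Lt Nt Bt t" "C11_flat Xc Xu Lu mu Bu u" "C11_flat Xc Xs Ls mu Bs s"
    using assms by (simp_all add: admissible_def)
  obtain Dr where Dr: "C11 Xc Xc r Dr Lr mu" "\<forall>h\<in>Xc. Dr 0 h = 0" using f(1) by (auto simp: C11_flat_def)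
  obtain Dt where Dt: "C11 Xc Xc t Dt Lt Nt" "\<forall>h\<in>Xc. Dt 0 h = 0" using f(2) by (auto simp: C11_flat_def)
  obtain Du where Du: "C11 Xc Xu u Du Lu mu" "\<forall>h\<in>Xc. Du 0 h = 0" using f(3) by (auto simp: C11_flat_def)
  obtain Ds where Ds: "C11 Xc Xs s Ds Ls mu" "\<forall>h\<in>Xc. Ds 0 h = 0" using f(4) by (auto simp: C11_flat_def)
  show thesis
    by (rule that[OF Dr(1) Dt(1) Du(1) Ds(1)]) (use Dr(2) Dt(2) Du(2) Ds(2) f in \<open>auto simp: C11_flat_def\<close>)
qed

lemma stepR_flat:
  assumes r: "C11_flat Xc Xc Lr mu Br r" and u: "C11_flat Xc Xu Lu mu Bu u" and s: "C11_flat Xc Xs Ls mu Bs s"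
  shows "C11_flat Xc Xc Lr mu Br (stepR r u s)"
proof -
  obtain Dr Du Ds where Cr: "C11 Xc Xc r Dr Lr mu" and Cu: "C11 Xc Xu u Du Lu mu" and Cs: "C11 Xc Xs s Ds Ls mu"
    and D0: "\<And>h. h \<in> Xc \<Longrightarrow> Dr 0 h = 0 \<and> Du 0 h = 0 \<and> Ds 0 h = 0" and z: "r 0 = 0" "u 0 = 0" "s 0 = 0"
    by (metis C11_flatD r u s)
  have "DstepR r Dr u Du s Ds 0 h = 0" if "h \<in> Xc" for h
    using D0[OF that] that A_c KC0 z kc0 by (auto simp: DstepR_def DK_def K_def G0 p_zero)
  moreover have "stepR r u s 0 = 0" by (simp add: stepR_def K_def z kc0 g0 p_zero)
  moreover have "norm (stepR r u s x) \<le> Br" if x: "x \<in> Xc" for x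
  proof -
    have "norm (A (kc x)) \<le> ac * Bk"
      using A_bound(1)[OF C11D(1)[OF kc_C11 x]] mult_left_mono[OF Bk[OF x] ac_nonneg] by linarith
    moreover have "norm (pc (g (K u s x))) \<le> Bg" using norm_pc Bg order_trans by blast
    ultimately have "norm (A (kc x) + pc (g (K u s x))) \<le> ac * Bk + Bg" by (rule norm_triangle_mono)
    then show ?thesis
      unfolding stepR_def Br_def using Bk[OF A_plus_in[OF Cr x]] by (intro norm_triangle_le_diff) linarith
  qed
  ultimately show ?thesis using stepR_C11[OF Cr Cu Cs] unfolding C11_flat_def by blast
qed

lemma stepT_flat:
  assumes r: "C11_flat Xc Xc Lr mu Br r" and t: "C11_flat Xc Xc Lt Nt Bt t"
  shows "C11_flat Xc Xc Lt Nt Bt (stepT r t)"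
proof -
  obtain Dr Dt where Cr: "C11 Xc Xc r Dr Lr mu" and Ct: "C11 Xc Xc t Dt Lt Nt"
    and D0: "\<And>h. h \<in> Xc \<Longrightarrow> Dr 0 h = 0 \<and> Dt 0 h = 0" and z: "r 0 = 0" "t 0 = 0" and Br: "\<And>x. x \<in> Xc \<Longrightarrow> norm (r x) \<le> Br"
    by (metis C11_flatD r t)
  have "DstepT Dr t Dt 0 h = 0" if "h \<in> Xc" for h
    using D0[OF that] D0[OF Aci(1)[OF that]] by (simp add: DstepT_def Aci_0 z)
  moreover have "stepT r t 0 = 0" by (simp add: stepT_def Aci_0 z)
  moreover have "norm (stepT r t x) \<le> Bt" if x: "x \<in> Xc" for x
  proof -
    have "norm (stepT r t x) \<le> aci * norm (r (Aci x + t x))"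
      unfolding stepT_def using Aci_bound C11D(1)[OF Cr Aci_plus_in[OF Ct x]] by simp
    also have "\<dots> \<le> aci * Br" using Br[OF Aci_plus_in[OF Ct x]] aci_nonneg by (rule mult_left_mono)
    finally show ?thesis unfolding Bt_def .
  qed
  ultimately show ?thesis using stepT_C11[OF Cr Ct] unfolding C11_flat_def by blast
qed

lemma stepU_flat:
  assumes r: "C11_flat Xc Xc Lr mu Br r" and u: "C11_flat Xc Xu Lu mu Bu u" and s: "C11_flat Xc Xs Ls mu Bs s"
  shows "C11_flat Xc Xu Lu mu Bu (stepU r u s)"
proof -
  obtain Dr Du Ds where Cr: "C11 Xc Xc r Dr Lr mu" and Cu: "C11 Xc Xu u Du Lu mu" and Cs: "C11 Xc Xs s Ds Ls mu"
    and D0: "\<And>h. h \<in> Xc \<Longrightarrow> Dr 0 h = 0 \<and> Du 0 h = 0 \<and> Ds 0 h = 0" and z: "r 0 = 0" "u 0 = 0" "s 0 = 0"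
    and Bu: "\<And>x. x \<in> Xc \<Longrightarrow> norm (u x) \<le> Bu"
    by (metis C11_flatD r u s)
  have "DstepU r Dr u Du s Ds 0 h = 0" if "h \<in> Xc" for h
    using D0[OF that] D0[OF A_c[THEN subsetD, OF imageI[OF that]]] that
    by (simp add: DstepU_def DK_def K_def G0 p_zero z kc0 KC0 Aui_0)
  moreover have "stepU r u s 0 = 0" by (simp add: stepU_def K_def z kc0 g0 p_zero Aui_0)
  moreover have "norm (stepU r u s x) \<le> Bu" if x: "x \<in> Xc" for x
  proof -
    have "u (A x + r x) - pu (g (K u s x)) \<in> Xu"
      using C11D(1)[OF Cu A_plus_in[OF Cr x]] pu_in subu by (simp add: subspace_diff)
    then have "norm (stepU r u s x) \<le> aui * norm (u (A x + r x) - pu (g (K u s x)))"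
      unfolding stepU_def by (rule Aui_bound)
    also have "\<dots> \<le> aui * (Bu + Bg)"
      using Bu[OF A_plus_in[OF Cr x]] norm_pu[of "g (K u s x)"] Bg[of "K u s x"] aui_nonneg
      by (intro mult_left_mono norm_triangle_le_diff) auto
    finally show ?thesis using Bu_eq by simp
  qed
  ultimately show ?thesis using stepU_C11[OF Cr Cu Cs] unfolding C11_flat_def by blast
qed

lemma stepS_flat:
  assumes t: "C11_flat Xc Xc Lt Nt Bt t" and u: "C11_flat Xc Xu Lu mu Bu u" and s: "C11_flat Xc Xs Ls mu Bs s"
  shows "C11_flat Xc Xs Ls mu Bs (stepS t u s)"
proof -
  obtain Dt Du Ds where Ct: "C11 Xc Xc t Dt Lt Nt" and Cu: "C11 Xc Xu u Du Lu mu" and Cs: "C11 Xc Xs s Ds Ls mu"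
    and D0: "\<And>h. h \<in> Xc \<Longrightarrow> Dt 0 h = 0 \<and> Du 0 h = 0 \<and> Ds 0 h = 0" and z: "t 0 = 0" "u 0 = 0" "s 0 = 0"
    and Bs: "\<And>x. x \<in> Xc \<Longrightarrow> norm (s x) \<le> Bs"
    by (metis C11_flatD t u s)
  have "DstepS t Dt u Du s Ds 0 h = 0" if "h \<in> Xc" for h
    using D0[OF that] D0[OF Aci(1)[OF that]] Aci(1)[OF that]
    by (simp add: DstepS_def DK_def K_def G0 p_zero z kc0 KC0 Aci_0)
  moreover have "stepS t u s 0 = 0" by (simp add: stepS_def K_def z kc0 g0 p_zero Aci_0)
  moreover have "norm (stepS t u s x) \<le> Bs" if x: "x \<in> Xc" for x
  proof -
    have "norm (A (s (Aci x + t x))) \<le> asn * Bs"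
      using A_bound(2)[OF C11D(1)[OF Cs Aci_plus_in[OF Ct x]]]
        mult_left_mono[OF Bs[OF Aci_plus_in[OF Ct x]] asn_nonneg] by linarith
    moreover have "norm (ps (g (K u s (Aci x + t x)))) \<le> Bg" using norm_ps Bg order_trans by blast
    ultimately show ?thesis unfolding stepS_def using Bs_eq norm_triangle_mono by fastforce
  qed
  ultimately show ?thesis using stepS_C11[OF Ct Cu Cs] unfolding C11_flat_def by blast
qed

lemma admissible_step:
  "admissible r t u s \<Longrightarrow> admissible (stepR r u s) (stepT r t) (stepU r u s) (stepS t u s)"
  unfolding admissible_def using stepR_flat stepT_flat stepU_flat stepS_flat by blast

definition close :: "real \<Rightarrow> real \<Rightarrow> ('a \<Rightarrow> 'a) \<Rightarrow> ('a \<Rightarrow> 'a) \<Rightarrow> ('a \<Rightarrow> 'a) \<Rightarrow> ('a \<Rightarrow> 'a)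
    \<Rightarrow> ('a \<Rightarrow> 'a) \<Rightarrow> ('a \<Rightarrow> 'a) \<Rightarrow> ('a \<Rightarrow> 'a) \<Rightarrow> ('a \<Rightarrow> 'a) \<Rightarrow> bool" where
  "close wt d r t u s r' t' u' s' \<longleftrightarrow> (\<forall>x\<in>Xc. norm (r x - r' x) \<le> d \<and> norm (t x - t' x) \<le> wt * d \<and>
     norm (u x - u' x) \<le> d \<and> norm (s x - s' x) \<le> d)"

context
  fixes r t u s r' t' u' s' :: "'a \<Rightarrow> 'a" and wt d :: real
  assumes adm: "admissible r t u s" and adm': "admissible r' t' u' s'"
    and cl: "close wt d r t u s r' t' u' s'" and d: "0 \<le> d"
begin

private lemma admissible_C11:
  obtains Dr Dt Du Ds Dr' Dt' Du' Ds'
  where "C11 Xc Xc r Dr Lr mu" "C11 Xc Xc t Dt Lt Nt" "C11 Xc Xu u Du Lu mu" "C11 Xc Xs s Ds Ls mu"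
    "C11 Xc Xc r' Dr' Lr mu" "C11 Xc Xc t' Dt' Lt Nt" "C11 Xc Xu u' Du' Lu mu" "C11 Xc Xs s' Ds' Ls mu"
  by (rule admissibleE[OF adm], rule admissibleE[OF adm'], rule that)

private lemma close_dist:
  "x \<in> Xc \<Longrightarrow> norm (r x - r' x) \<le> d" "x \<in> Xc \<Longrightarrow> norm (t x - t' x) \<le> wt * d"
  "x \<in> Xc \<Longrightarrow> norm (u x - u' x) \<le> d" "x \<in> Xc \<Longrightarrow> norm (s x - s' x) \<le> d"
  using cl unfolding close_def by auto

private lemma K_dist: "x \<in> Xc \<Longrightarrow> norm (K u s x - K u' s' x) \<le> d"
proof -
  assume x: "x \<in> Xc"
  obtain Dr Dt Du Ds Dr' Dt' Du' Ds' where
    Cu: "C11 Xc Xu u Du Lu mu" and Cs: "C11 Xc Xs s Ds Ls mu"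
    and Cu': "C11 Xc Xu u' Du' Lu mu" and Cs': "C11 Xc Xs s' Ds' Ls mu"
    by (metis admissible_C11)
  have "u x - u' x \<in> Xu" "s x - s' x \<in> Xs"
    using subspace_diff[OF subu C11D(1)[OF Cu x] C11D(1)[OF Cu' x]]
      subspace_diff[OF subs C11D(1)[OF Cs x] C11D(1)[OF Cs' x]] .
  moreover have "K u s x - K u' s' x = 0 + (u x - u' x) + (s x - s' x)" by (simp add: K_def algebra_simps)
  ultimately show ?thesis using norm_c_u_s[OF zero_in(1)] close_dist(3,4)[OF x] d by simp
qed

lemma stepR_dist:
  assumes x: "x \<in> Xc"
  shows "norm (stepR r u s x - stepR r' u' s' x) \<le> (Lg + Lc) * d"
proof -
  obtain Dr Dr' where Cr: "C11 Xc Xc r Dr Lr mu" and Cr': "C11 Xc Xc r' Dr' Lr mu" by (metis admissible_C11)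
  have "stepR r u s x - stepR r' u' s' x
      = pc (g (K u s x) - g (K u' s' x)) - (kc (A x + r x) - kc (A x + r' x))"
    unfolding stepR_def by (simp add: p_diff algebra_simps)
  moreover have "norm (pc (g (K u s x) - g (K u' s' x))) \<le> Lg * d"
    using norm_pc C11D(5)[OF g_C11, of "K u' s' x" "K u s x"] mult_left_mono[OF K_dist[OF x] Lg0]
    by (meson UNIV_I order_trans)
  moreover have "norm (kc (A x + r x) - kc (A x + r' x)) \<le> Lc * d"
    using C11D(5)[OF kc_C11 A_plus_in[OF Cr' x] A_plus_in[OF Cr x]] mult_left_mono[OF close_dist(1)[OF x] Lc0]
    by simp
  ultimately show ?thesis by (simp add: distrib_right norm_triangle_le_diff)
qed

lemma stepT_dist:
  assumes x: "x \<in> Xc"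
  shows "norm (stepT r t x - stepT r' t' x) \<le> aci * (1 + Lr * wt) * d"
proof -
  obtain Dr Dt Dr' Dt' where Cr: "C11 Xc Xc r Dr Lr mu" and Ct: "C11 Xc Xc t Dt Lt Nt"
    and Cr': "C11 Xc Xc r' Dr' Lr mu" and Ct': "C11 Xc Xc t' Dt' Lt Nt" by (metis admissible_C11)
  define p p' where "p = Aci x + t x" and "p' = Aci x + t' x"
  have pp: "p \<in> Xc" "p' \<in> Xc" unfolding p_def p'_def using Aci_plus_in Ct Ct' x by blast+
  have "stepT r t x - stepT r' t' x = Aci (r' p' - r p)"
    unfolding stepT_def p_def[symmetric] p'_def[symmetric]
    using linear_on_diff[OF linear_on_Aci subc C11D(1)[OF Cr' pp(2)] C11D(1)[OF Cr pp(1)]] by simp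
  moreover have "r' p' - r p \<in> Xc" using C11D(1)[OF Cr pp(1)] C11D(1)[OF Cr' pp(2)] subc by (simp add: subspace_diff)
  ultimately have "norm (stepT r t x - stepT r' t' x) \<le> aci * norm (r' p' - r p)" using Aci_bound by simp
  also have "\<dots> \<le> aci * (Lr * (wt * d) + d)"
  proof (rule mult_left_mono[OF _ aci_nonneg])
    have "norm (r p - r p') \<le> Lr * (wt * d)"
      using C11D(5)[OF Cr pp(2,1)] mult_left_mono[OF close_dist(2)[OF x] Lr_nonneg] by (simp add: p_def p'_def)
    then show "norm (r' p' - r p) \<le> Lr * (wt * d) + d"
      using close_dist(1)[OF pp(2)] norm_triangle_ineq[of "r' p' - r p'" "r p' - r p"]
      by (simp add: norm_minus_commute)
  qed
  finally show ?thesis by (simp add: algebra_simps)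
qed

lemma stepU_dist:
  assumes x: "x \<in> Xc"
  shows "norm (stepU r u s x - stepU r' u' s' x) \<le> aui * (1 + Lu + Lg) * d"
proof -
  obtain Dr Du Dr' Du' where Cr: "C11 Xc Xc r Dr Lr mu" and Cu: "C11 Xc Xu u Du Lu mu"
    and Cr': "C11 Xc Xc r' Dr' Lr mu" and Cu': "C11 Xc Xu u' Du' Lu mu" by (metis admissible_C11)
  define y y' where "y = A x + r x" and "y' = A x + r' x"
  have yy: "y \<in> Xc" "y' \<in> Xc" unfolding y_def y'_def using A_plus_in Cr Cr' x by blast+
  define a a' where "a = u y - pu (g (K u s x))" and "a' = u' y' - pu (g (K u' s' x))"
  have aa: "a \<in> Xu" "a' \<in> Xu" unfolding a_def a'_def using C11D(1)[OF Cu yy(1)] C11D(1)[OF Cu' yy(2)] pu_in subu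
    by (simp_all add: subspace_diff)
  have "stepU r u s x - stepU r' u' s' x = Aui (a - a')"
    unfolding stepU_def y_def[symmetric] y'_def[symmetric] a_def[symmetric] a'_def[symmetric]
    using linear_on_diff[OF linear_on_Aui subu aa] by simp
  then have "norm (stepU r u s x - stepU r' u' s' x) \<le> aui * norm (a - a')"
    using Aui_bound aa subu by (simp add: subspace_diff)
  also have "\<dots> \<le> aui * (Lu * d + d + Lg * d)"
  proof (rule mult_left_mono[OF _ aui_nonneg])
    have "a - a' = (u y - u y') + (u y' - u' y') - pu (g (K u s x) - g (K u' s' x))"
      by (simp add: a_def a'_def p_diff algebra_simps)
    moreover have "norm (u y - u y') \<le> Lu * d"
      using C11D(5)[OF Cu yy(2,1)] mult_left_mono[OF close_dist(1)[OF x] Lu_nonneg] by (simp add: y_def y'_def)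
    moreover have "norm (pu (g (K u s x) - g (K u' s' x))) \<le> Lg * d"
      using norm_pu C11D(5)[OF g_C11, of "K u' s' x" "K u s x"] mult_left_mono[OF K_dist[OF x] Lg0]
      by (meson UNIV_I order_trans)
    ultimately show "norm (a - a') \<le> Lu * d + d + Lg * d"
      using close_dist(3)[OF yy(2)] by (metis add_mono norm_triangle_le_diff norm_triangle_mono)
  qed
  finally show ?thesis by (simp add: algebra_simps)
qed

lemma stepS_dist:
  assumes x: "x \<in> Xc"
  shows "norm (stepS t u s x - stepS t' u' s' x) \<le> (asn * (1 + Ls * wt) + Lg * ((1 + Lc) * wt + 1)) * d"
proof -
  obtain Dt Du Ds Dt' Ds' where Ct: "C11 Xc Xc t Dt Lt Nt" and Cu: "C11 Xc Xu u Du Lu mu"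
    and Cs: "C11 Xc Xs s Ds Ls mu" and Ct': "C11 Xc Xc t' Dt' Lt Nt" and Cs': "C11 Xc Xs s' Ds' Ls mu"
    by (metis admissible_C11)
  define p p' where "p = Aci x + t x" and "p' = Aci x + t' x"
  have pp: "p \<in> Xc" "p' \<in> Xc" unfolding p_def p'_def using Aci_plus_in Ct Ct' x by blast+
  have pd: "norm (p - p') \<le> wt * d" using close_dist(2)[OF x] by (simp add: p_def p'_def)
  have "s p - s' p' \<in> Xs" using subspace_diff[OF subs C11D(1)[OF Cs pp(1)] C11D(1)[OF Cs' pp(2)]] .
  then have "norm (A (s p - s' p')) \<le> asn * norm (s p - s' p')" by (rule A_bound(2))
  also have "\<dots> \<le> asn * (Ls * (wt * d) + d)"
  proof (rule mult_left_mono[OF _ asn_nonneg])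
    have "norm (s p - s p') \<le> Ls * (wt * d)" using C11D(5)[OF Cs pp(2,1)] mult_left_mono[OF pd Ls_nonneg]
      by (simp add: norm_minus_commute)
    then show "norm (s p - s' p') \<le> Ls * (wt * d) + d"
      using close_dist(4)[OF pp(2)] norm_triangle_ineq[of "s p - s p'" "s p' - s' p'"] by simp
  qed
  finally have n1: "norm (A (s p - s' p')) \<le> asn * (Ls * (wt * d) + d)" .
  have "(1 + Lc) * norm (p - p') \<le> (1 + Lc) * (wt * d)" using pd Lc0 by (intro mult_left_mono) auto
  then have "norm (K u s p - K u s p') \<le> (1 + Lc) * (wt * d)"
    using C11D(5)[OF C11_K[OF Cu Cs] pp(2,1)] by linarith
  then have "norm (K u s p - K u' s' p') \<le> (1 + Lc) * (wt * d) + d"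
    using K_dist[OF pp(2)] norm_triangle_ineq[of "K u s p - K u s p'" "K u s p' - K u' s' p'"] by simp
  then have n2: "norm (ps (g (K u s p) - g (K u' s' p'))) \<le> Lg * ((1 + Lc) * (wt * d) + d)"
    using norm_ps C11D(5)[OF g_C11, of "K u' s' p'" "K u s p"] mult_left_mono[OF _ Lg0]
    by (meson UNIV_I order_trans)
  have "stepS t u s x - stepS t' u' s' x = A (s p - s' p') + ps (g (K u s p) - g (K u' s' p'))"
    unfolding stepS_def p_def[symmetric] p'_def[symmetric] by (simp add: p_diff A.diff algebra_simps)
  then have "norm (stepS t u s x - stepS t' u' s' x) \<le> asn * (Ls * (wt * d) + d) + Lg * ((1 + Lc) * (wt * d) + d)"
    using norm_triangle_mono[OF n1 n2] by simp
  then show ?thesis by (simp add: algebra_simps)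
qed

end

text \<open>
  Taking \<open>wt = aci / (q - aci * Lr)\<close> makes the
  \<open>t\<close>-inequality an equality; at \<open>q = 1\<close> the last inequality is \<open>\<theta>\<^sub>0\<^sub>,\<^sub>3 < 1\<close>, so some \<open>q < 1\<close> works.
\<close>
definition "contraction_weights q wt \<longleftrightarrow> 0 < q \<and> q < 1 \<and> 0 \<le> wt \<and> Lg + Lc \<le> q \<and>
   aci * (1 + Lr * wt) \<le> q * wt \<and> aui * (1 + Lu + Lg) \<le> q \<and> asn * (1 + Ls * wt) + Lg * ((1 + Lc) * wt + 1) \<le> q"

lemma contraction_weights_exist: "\<exists>q wt. contraction_weights q wt"
proof -
  define f where "f q = asn * (1 + Ls * (aci / (q - aci * Lr))) + Lg * ((1 + Lc) * (aci / (q - aci * Lr)) + 1)" for q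
  have d: "1 - aci * Lr > 0" using S2_bounds(2) by (simp add: mult.commute)
  have "aci / (1 - aci * Lr) = Lm1" using Lm1_eq d by (simp add: field_simps)
  then have f1: "f 1 < 1" using S2_bounds(7)[of 0] unfolding f_def by (simp add: algebra_simps)
  define c0 where "c0 = max (Lg + Lc) (max (aui * (1 + Lu + Lg)) (aci * Lr))"
  have c0: "c0 < 1" unfolding c0_def using S2_bounds(5)[of "0::nat"] S2_bounds(6)[of 0] d
    by (simp add: algebra_simps)
  have "\<forall>\<^sub>F q in at_left 1. c0 < q" by (rule order_tendstoD(1)[OF tendsto_ident_at c0])
  moreover have "\<forall>\<^sub>F q in at_left (1::real). q \<in> {0<..<1}" by (rule eventually_at_left_real) simp
  moreover have "((\<lambda>q. q - f q) \<longlongrightarrow> 1 - f 1) (at_left 1)"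
    unfolding f_def by (intro tendsto_intros) (use d in auto)
  then have "\<forall>\<^sub>F q in at_left 1. 0 < q - f q" by (rule order_tendstoD(1)) (use f1 in simp)
  ultimately have "\<forall>\<^sub>F q in at_left 1. c0 < q \<and> q \<in> {0<..<1} \<and> 0 < q - f q"
    by eventually_elim auto
  then have "\<exists>q. c0 < q \<and> q \<in> {0<..<1} \<and> 0 < q - f q"
    using eventually_happens trivial_limit_at_left_real[of 1] unfolding trivial_limit_def by blast
  then obtain q where q: "c0 < q" "0 < q" "q < 1" "f q < q" by auto
  have qa: "q - aci * Lr > 0" using q(1) unfolding c0_def by simp
  define wt where "wt = aci / (q - aci * Lr)"
  have "0 \<le> wt" unfolding wt_def using qa aci_nonneg by simp
  moreover have "aci * (1 + Lr * wt) = q * wt" unfolding wt_def using qa by (simp add: field_simps)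
  ultimately have "contraction_weights q wt"
    unfolding contraction_weights_def using q c0_def f_def wt_def by auto
  then show ?thesis by blast
qed

lemma step_contraction:
  assumes "admissible r t u s" "admissible r' t' u' s'" "close wt d r t u s r' t' u' s'" "0 \<le> d"
    and q: "contraction_weights q wt"
  shows "close wt (q * d) (stepR r u s) (stepT r t) (stepU r u s) (stepS t u s)
           (stepR r' u' s') (stepT r' t') (stepU r' u' s') (stepS t' u' s')"
  unfolding close_def
proof (intro ballI conjI)
  fix x assume x: "x \<in> Xc"
  have le: "Lg + Lc \<le> q" "aci * (1 + Lr * wt) \<le> q * wt" "aui * (1 + Lu + Lg) \<le> q"
    "asn * (1 + Ls * wt) + Lg * ((1 + Lc) * wt + 1) \<le> q"
    using q by (auto simp: contraction_weights_def)
  show "norm (stepR r u s x - stepR r' u' s' x) \<le> q * d"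
    using stepR_dist[OF assms(1-4) x] mult_right_mono[OF le(1) assms(4)] by linarith
  show "norm (stepT r t x - stepT r' t' x) \<le> wt * (q * d)"
    using stepT_dist[OF assms(1-4) x] mult_right_mono[OF le(2) assms(4)] by (simp add: mult_ac)
  show "norm (stepU r u s x - stepU r' u' s' x) \<le> q * d"
    using stepU_dist[OF assms(1-4) x] mult_right_mono[OF le(3) assms(4)] by linarith
  show "norm (stepS t u s x - stepS t' u' s' x) \<le> q * d"
    using stepS_dist[OF assms(1-4) x] mult_right_mono[OF le(4) assms(4)] by linarith
qed

section \<open>Fixed point and conjugacy\<close>

definition "iterate k = ((\<lambda>(r, t, u, s). (stepR r u s, stepT r t, stepU r u s, stepS t u s)) ^^ k)
  ((\<lambda>x. 0), (\<lambda>x. 0), (\<lambda>x. 0), (\<lambda>x. 0))"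
definition "Rk k = fst (iterate k)"
definition "Tk k = fst (snd (iterate k))"
definition "Uk k = fst (snd (snd (iterate k)))"
definition "Sk k = snd (snd (snd (iterate k)))"

lemma iterate_0: "Rk 0 = (\<lambda>x. 0)" "Tk 0 = (\<lambda>x. 0)" "Uk 0 = (\<lambda>x. 0)" "Sk 0 = (\<lambda>x. 0)"
  by (simp_all add: Rk_def Tk_def Uk_def Sk_def iterate_def)

lemma iterate_Suc: "Rk (Suc k) = stepR (Rk k) (Uk k) (Sk k)" "Tk (Suc k) = stepT (Rk k) (Tk k)"
  "Uk (Suc k) = stepU (Rk k) (Uk k) (Sk k)" "Sk (Suc k) = stepS (Tk k) (Uk k) (Sk k)"
proof -
  have "iterate k = (Rk k, Tk k, Uk k, Sk k)" by (simp add: Rk_def Tk_def Uk_def Sk_def)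
  then have "iterate (Suc k) = (stepR (Rk k) (Uk k) (Sk k), stepT (Rk k) (Tk k), stepU (Rk k) (Uk k) (Sk k),
      stepS (Tk k) (Uk k) (Sk k))"
    by (simp add: iterate_def)
  then show "Rk (Suc k) = stepR (Rk k) (Uk k) (Sk k)" "Tk (Suc k) = stepT (Rk k) (Tk k)"
    "Uk (Suc k) = stepU (Rk k) (Uk k) (Sk k)" "Sk (Suc k) = stepS (Tk k) (Uk k) (Sk k)"
    by (simp_all add: Rk_def Tk_def Uk_def Sk_def)
qed

lemma admissible_iterate: "admissible (Rk k) (Tk k) (Uk k) (Sk k)"
  by (induction k) (simp_all add: iterate_0 iterate_Suc admissible_zero admissible_step)

definition "d0 = max Br (max Bu Bs)"

lemma d0_nonneg: "0 \<le> d0"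
  using B_nonneg by (simp add: d0_def le_max_iff_disj)

lemma close_iterate:
  assumes q: "contraction_weights q wt"
  shows "close wt (q ^ k * d0) (Rk k) (Tk k) (Uk k) (Sk k) (Rk (Suc k)) (Tk (Suc k)) (Uk (Suc k)) (Sk (Suc k))"
proof (induction k)
  case 0
  have "Tk 1 = (\<lambda>x. 0)" using iterate_Suc(2)[of 0] by (simp add: iterate_0 stepT_def Aci_0 fun_eq_iff)
  moreover have "norm (Rk 1 x) \<le> Br" "norm (Uk 1 x) \<le> Bu" "norm (Sk 1 x) \<le> Bs" if "x \<in> Xc" for x
    using admissible_iterate[of 1] that by (auto simp: admissible_def C11_flat_def)
  ultimately show ?case
    using q d0_nonneg by (auto simp: close_def iterate_0 d0_def contraction_weights_def le_max_iff_disj)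
next
  case (Suc k)
  have "0 \<le> q" using q by (simp add: contraction_weights_def)
  then show ?case
    using step_contraction[OF admissible_iterate admissible_iterate Suc _ q] d0_nonneg
    by (simp add: iterate_Suc[of "Suc k"] iterate_Suc[of k, symmetric] mult.assoc)
qed

lemma iterates_converge:
  assumes q: "contraction_weights q wt"
  obtains r t u s where "admissible r t u s"
    "\<And>k. close wt (d0 * q ^ k / (1 - q)) r t u s (Rk k) (Tk k) (Uk k) (Sk k)"
proof -
  have q01: "0 \<le> q" "q < 1" and wt: "0 \<le> wt" using q by (auto simp: contraction_weights_def)
  have steps: "norm (Rk (Suc k) x - Rk k x) \<le> d0 * q ^ k" "norm (Tk (Suc k) x - Tk k x) \<le> (wt * d0) * q ^ k"
    "norm (Uk (Suc k) x - Uk k x) \<le> d0 * q ^ k" "norm (Sk (Suc k) x - Sk k x) \<le> d0 * q ^ k"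
    if "x \<in> Xc" for k x
    using close_iterate[OF q, of k] that by (auto simp: close_def norm_minus_commute mult_ac)
  have adm: "C11_flat Xc Xc Lr mu Br (Rk k)" "C11_flat Xc Xc Lt Nt Bt (Tk k)"
    "C11_flat Xc Xu Lu mu Bu (Uk k)" "C11_flat Xc Xs Ls mu Bs (Sk k)" for k
    using admissible_iterate[of k] by (simp_all add: admissible_def)
  note R = C11_flat_geometric_limit[OF subc clc adm(1) mu_bounds(2) steps(1) d0_nonneg q01]
  note T = C11_flat_geometric_limit[OF subc clc adm(2) Nt_nonneg steps(2) mult_nonneg_nonneg[OF wt d0_nonneg] q01]
  note U = C11_flat_geometric_limit[OF subc clu adm(3) mu_bounds(2) steps(3) d0_nonneg q01]
  note S = C11_flat_geometric_limit[OF subc cls adm(4) mu_bounds(2) steps(4) d0_nonneg q01]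
  show thesis
  proof (rule that)
    show "admissible (\<lambda>x. lim (\<lambda>k. Rk k x)) (\<lambda>x. lim (\<lambda>k. Tk k x)) (\<lambda>x. lim (\<lambda>k. Uk k x)) (\<lambda>x. lim (\<lambda>k. Sk k x))"
      using R(1) T(1) U(1) S(1) by (simp add: admissible_def)
    show "close wt (d0 * q ^ k / (1 - q)) (\<lambda>x. lim (\<lambda>k. Rk k x)) (\<lambda>x. lim (\<lambda>k. Tk k x))
        (\<lambda>x. lim (\<lambda>k. Uk k x)) (\<lambda>x. lim (\<lambda>k. Sk k x)) (Rk k) (Tk k) (Uk k) (Sk k)" for k
      using R(2) T(2) U(2) S(2) by (simp add: close_def mult_ac)
  qed
qed

definition "is_fixed r t u s \<longleftrightarrow>
  (\<forall>x\<in>Xc. stepR r u s x = r x \<and> stepT r t x = t x \<and> stepU r u s x = u x \<and> stepS t u s x = s x)"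

lemma fixed_point_exists:
  obtains r t u s where "admissible r t u s" "is_fixed r t u s"
proof -
  obtain q wt where q: "contraction_weights q wt" using contraction_weights_exist by blast
  have q01: "0 \<le> q" "q < 1" using q by (auto simp: contraction_weights_def)
  define c where "c k = d0 * q ^ k / (1 - q)" for k
  obtain r t u s where adm: "admissible r t u s" and cl: "\<And>k. close wt (c k) r t u s (Rk k) (Tk k) (Uk k) (Sk k)"
    using iterates_converge[OF q] unfolding c_def by metis
  have c0: "0 \<le> c k" for k using d0_nonneg q01 by (simp add: c_def)
  have "(\<lambda>k. d0 * q ^ k / (1 - q)) \<longlonglongrightarrow> d0 * 0 / (1 - q)"
    by (intro tendsto_intros LIMSEQ_power_zero) (use q01 in auto)
  then have c_lim: "c \<longlonglongrightarrow> 0" by (simp add: c_def[abs_def])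
  then have wc_lim: "(\<lambda>k. wt * c k) \<longlonglongrightarrow> 0" by (rule tendsto_mult_right_zero)
  \<comment> \<open>The next iterate approximates both the limit and its image under the transform.\<close>
  have next_close: "close wt (q * c k) (stepR r u s) (stepT r t) (stepU r u s) (stepS t u s)
      (Rk (Suc k)) (Tk (Suc k)) (Uk (Suc k)) (Sk (Suc k))" for k
    using step_contraction[OF adm admissible_iterate cl c0 q] by (simp add: iterate_Suc)
  have "is_fixed r t u s"
    unfolding is_fixed_def
  proof (intro ballI conjI)
    fix x assume x: "x \<in> Xc"
    show "stepR r u s x = r x"
      by (rule eq_of_approximations[where F="\<lambda>k. Rk k x" and q=q and c=c])
         (use next_close cl x c_lim in \<open>auto simp: close_def\<close>)
    show "stepT r t x = t x"
      by (rule eq_of_approximations[where F="\<lambda>k. Tk k x" and q=q and c="\<lambda>k. wt * c k"])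
         (use next_close cl x wc_lim in \<open>auto simp: close_def mult_ac\<close>)
    show "stepU r u s x = u x"
      by (rule eq_of_approximations[where F="\<lambda>k. Uk k x" and q=q and c=c])
         (use next_close cl x c_lim in \<open>auto simp: close_def\<close>)
    show "stepS t u s x = s x"
      by (rule eq_of_approximations[where F="\<lambda>k. Sk k x" and q=q and c=c])
         (use next_close cl x c_lim in \<open>auto simp: close_def\<close>)
  qed
  then show thesis using that adm by blast
qed

context
  fixes r t u s :: "'a \<Rightarrow> 'a"
  assumes adm: "admissible r t u s" and fixed: "is_fixed r t u s"
begin

private lemma C11_facts:
  obtains Dr Dt Du Ds
  where "C11 Xc Xc r Dr Lr mu" "C11 Xc Xc t Dt Lt Nt" "C11 Xc Xu u Du Lu mu" "C11 Xc Xs s Ds Ls mu"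
  by (rule admissibleE[OF adm], rule that)

lemma fixed_right_inverse:
  assumes x: "x \<in> Xc"
  shows "A (Aci x + t x) + r (Aci x + t x) = x"
proof -
  obtain Dr Dt Du Ds where Cr: "C11 Xc Xc r Dr Lr mu" and Ct: "C11 Xc Xc t Dt Lt Nt" by (rule C11_facts)
  define p where "p = Aci x + t x"
  have tx: "t x = - Aci (r p)" using fixed x by (simp add: is_fixed_def stepT_def p_def)
  have rp: "r p \<in> Xc" using C11D(1)[OF Cr Aci_plus_in[OF Ct x]] by (simp add: p_def)
  have "A p = A (Aci x) + A (t x)" unfolding p_def by (rule A.add)
  also have "\<dots> = x - r p" by (simp add: Aci(2)[OF x] tx A.neg Aci(2)[OF rp])
  finally show ?thesis by (simp add: p_def)
qed

lemma fixed_injective: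
  assumes a: "a \<in> Xc" and b: "b \<in> Xc" and eq: "A a + r a = A b + r b"
  shows "a = b"
proof -
  obtain Dr Dt Du Ds where Cr: "C11 Xc Xc r Dr Lr mu" by (rule C11_facts)
  have ab: "a - b \<in> Xc" and rab: "r b - r a \<in> Xc" using a b C11D(1)[OF Cr] subc by (simp_all add: subspace_diff)
  have "A (a - b) = r b - r a" using eq by (simp add: A.diff algebra_simps)
  then have "a - b = Aci (r b - r a)" using Aci(3)[OF ab] by simp
  then have "norm (a - b) \<le> aci * norm (r b - r a)" using Aci_bound[OF rab] by simp
  also have "\<dots> \<le> aci * (Lr * norm (a - b))"
    using C11D(5)[OF Cr a b] aci_nonneg by (simp add: mult_left_mono norm_minus_commute)
  finally have "(1 - aci * Lr) * norm (a - b) \<le> 0" by (simp add: algebra_simps)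
  moreover have "aci * Lr < 1" using S2_bounds(2) by (simp add: mult.commute)
  ultimately show ?thesis by (simp add: mult_le_0_iff)
qed

lemma fixed_left_inverse:
  assumes x: "x \<in> Xc"
  shows "Aci (A x + r x) + t (A x + r x) = x"
proof -
  obtain Dr Dt Du Ds where Cr: "C11 Xc Xc r Dr Lr mu" and Ct: "C11 Xc Xc t Dt Lt Nt" by (rule C11_facts)
  show ?thesis
    using fixed_injective[OF Aci_plus_in[OF Ct A_plus_in[OF Cr x]] x fixed_right_inverse[OF A_plus_in[OF Cr x]]] .
qed

lemma fixed_bij: "bij_betw (\<lambda>x. A x + r x) Xc Xc"
proof -
  obtain Dr Dt Du Ds where Cr: "C11 Xc Xc r Dr Lr mu" and Ct: "C11 Xc Xc t Dt Lt Nt" by (rule C11_facts)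
  have "inj_on (\<lambda>x. A x + r x) Xc" by (rule inj_onI) (rule fixed_injective)
  moreover have "(\<lambda>x. A x + r x) ` Xc = Xc"
  proof
    show "(\<lambda>x. A x + r x) ` Xc \<subseteq> Xc" by (rule image_subsetI) (rule A_plus_in[OF Cr])
    show "Xc \<subseteq> (\<lambda>x. A x + r x) ` Xc"
    proof
      fix x assume "x \<in> Xc"
      show "x \<in> (\<lambda>x. A x + r x) ` Xc"
        by (rule image_eqI[where f="\<lambda>x. A x + r x", OF fixed_right_inverse[OF \<open>x \<in> Xc\<close>, symmetric]
              Aci_plus_in[OF Ct \<open>x \<in> Xc\<close>]])
    qed
  qed
  ultimately show ?thesis by (simp add: bij_betw_def)
qed

lemma fixed_conjugacy:
  assumes x: "x \<in> Xc"
  shows "A (K u s x) + g (K u s x) = K u s (A x + r x)"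
proof -
  obtain Dr Dt Du Ds where Cr: "C11 Xc Xc r Dr Lr mu" and Cu: "C11 Xc Xu u Du Lu mu" by (rule C11_facts)
  define y where "y = A x + r x"
  define gk where "gk = g (K u s x)"
  have y: "y \<in> Xc" using A_plus_in[OF Cr x] by (simp add: y_def)
  \<comment> \<open>The three fixed-point equations are the three components of the conjugacy.\<close>
  have R: "r x = A (kc x) + pc gk - kc y" using fixed x by (simp add: is_fixed_def stepR_def gk_def y_def)
  have U: "A (u x) = u y - pu gk"
  proof -
    have "u x = Aui (u y - pu gk)" using fixed x by (simp add: is_fixed_def stepU_def gk_def y_def)
    moreover have "u y - pu gk \<in> Xu" using C11D(1)[OF Cu y] pu_in subu by (simp add: subspace_diff)
    ultimately show ?thesis using Aui(2) by simp
  qed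
  have S: "s y = A (s x) + ps gk"
  proof -
    have "stepS t u s y = s y" using fixed y by (simp add: is_fixed_def)
    then show ?thesis using fixed_left_inverse[OF x] by (simp add: stepS_def gk_def y_def)
  qed
  have "A (K u s x) + g (K u s x) = A x + A (kc x) + A (u x) + A (s x) + (pc gk + pu gk + ps gk)"
    unfolding p_sum gk_def K_def by (simp add: A.add)
  also have "\<dots> = (A x + r x + kc y) + (A (u x) + pu gk) + (A (s x) + ps gk)"
    using R by (simp add: algebra_simps)
  also have "\<dots> = K u s y" using U S by (simp add: K_def y_def)
  finally show ?thesis by (simp add: y_def)
qed

end

end

lemma (in cm_setting) C1_center_manifold:
  assumes \<epsilon>: "0 \<le> \<epsilon>"
    and g: "Ckb n UNIV UNIV g Dg" "g 0 = 0" "\<forall>v. Dg 1 0 [v] = 0" "\<forall>y. ml_bound UNIV 1 (Dg 1 y) Lg"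
      "\<forall>y. ml_bound UNIV 2 (Dg 2 y) \<epsilon>"
    and kc: "Ckb n Xc Xc kc Dkc" "kc 0 = 0" "\<forall>v\<in>Xc. Dkc 1 0 [v] = 0" "\<forall>y\<in>Xc. ml_bound Xc 1 (Dkc 1 y) Lc"
      "\<forall>y\<in>Xc. ml_bound Xc 2 (Dkc 2 y) \<epsilon>"
  shows "\<exists>r Dr ku Dku ks Dks t Dt.
    Ckb 1 Xc Xc r Dr \<and> Ckb 1 Xc Xu ku Dku \<and> Ckb 1 Xc Xs ks Dks \<and> Ckb 1 Xc Xc t Dt \<and>
    (\<forall>x\<in>Xc. A (x + kc x + ku x + ks x) + g (x + kc x + ku x + ks x) =
       A x + r x + kc (A x + r x) + ku (A x + r x) + ks (A x + r x)) \<and>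
    bij_betw (\<lambda>x. A x + r x) Xc Xc \<and>
    (\<forall>x\<in>Xc. A (Aci x + t x) + r (Aci x + t x) = x \<and> Aci (A x + r x) + t (A x + r x) = x) \<and>
    r 0 = 0 \<and> t 0 = 0 \<and> ku 0 = 0 \<and> ks 0 = 0 \<and>
    (\<forall>v\<in>Xc. Dr 1 0 [v] = 0 \<and> Dt 1 0 [v] = 0 \<and> Dku 1 0 [v] = 0 \<and> Dks 1 0 [v] = 0) \<and>
    (\<forall>y\<in>Xc. ml_bound Xc 1 (Dr 1 y) Lr \<and> ml_bound Xc 1 (Dt 1 y) Lt \<and>
       ml_bound Xc 1 (Dku 1 y) Lu \<and> ml_bound Xc 1 (Dks 1 y) Ls) \<and>
    (\<lambda>x. A x + g x) ` (\<lambda>x. x + kc x + ku x + ks x) ` Xc \<subseteq> (\<lambda>x. x + kc x + ku x + ks x) ` Xc"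
proof -
  have gC: "C11 UNIV UNIV g (\<lambda>y h. Dg 1 y [h]) Lg \<epsilon>"
    using Ckb2_imp_C11[OF subspace_UNIV contractive_projection_id g(1) n2 Lg0 _ \<epsilon>] g(4,5) by simp
  have kC: "C11 Xc Xc kc (\<lambda>y h. Dkc 1 y [h]) Lc \<epsilon>"
    using Ckb2_imp_C11[OF subc pc_projection kc(1) n2 Lc0 _ \<epsilon>] kc(4,5) by simp
  obtain Bg Bk where "\<forall>x\<in>UNIV. norm (g x) \<le> Bg" "\<forall>x\<in>Xc. norm (kc x) \<le> Bk"
    using Ckb_bounded[OF g(1)] Ckb_bounded[OF kc(1)] by metis
  then interpret D: cm_data A Xc Xu Xs n Lg Lc g "\<lambda>y h. Dg 1 y [h]" kc "\<lambda>y h. Dkc 1 y [h]" \<epsilon> \<epsilon> Bg Bk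
    by unfold_locales (use gC kC g kc \<epsilon> in auto)
  obtain r t u s where adm: "D.admissible r t u s" and fixed: "D.is_fixed r t u s"
    by (rule D.fixed_point_exists)
  obtain Dr Dt Du Ds where Cr: "C11 Xc Xc r Dr Lr D.mu" and Ct: "C11 Xc Xc t Dt Lt D.Nt"
    and Cu: "C11 Xc Xu u Du Lu D.mu" and Cs: "C11 Xc Xs s Ds Ls D.mu"
    and D0: "\<And>h. h \<in> Xc \<Longrightarrow> Dr 0 h = 0 \<and> Dt 0 h = 0 \<and> Du 0 h = 0 \<and> Ds 0 h = 0"
    and zero: "r 0 = 0" "t 0 = 0" "u 0 = 0" "s 0 = 0"
    and bounded: "\<And>x. x \<in> Xc \<Longrightarrow> norm (r x) \<le> D.Br \<and> norm (t x) \<le> D.Bt \<and> norm (u x) \<le> D.Bu \<and> norm (s x) \<le> D.Bs"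
    by (rule D.admissibleE[OF adm], rule that)
  have conj: "A (x + kc x + u x + s x) + g (x + kc x + u x + s x) =
      A x + r x + kc (A x + r x) + u (A x + r x) + s (A x + r x)" if "x \<in> Xc" for x
    using D.fixed_conjugacy[OF adm fixed that] by (simp add: D.K_def)
  show ?thesis
  proof (rule exI[of _ r], rule exI[of _ "jet1 r Dr"], rule exI[of _ u], rule exI[of _ "jet1 u Du"],
      rule exI[of _ s], rule exI[of _ "jet1 s Ds"], rule exI[of _ t], rule exI[of _ "jet1 t Dt"],
      intro conjI ballI)
    show "Ckb 1 Xc Xc r (jet1 r Dr)" "Ckb 1 Xc Xu u (jet1 u Du)" "Ckb 1 Xc Xs s (jet1 s Ds)"
      "Ckb 1 Xc Xc t (jet1 t Dt)"
      using C11_imp_Ckb1[OF subc Cr D.mu_bounds(2)] C11_imp_Ckb1[OF subc Cu D.mu_bounds(2)]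
        C11_imp_Ckb1[OF subc Cs D.mu_bounds(2)] C11_imp_Ckb1[OF subc Ct D.Nt_nonneg] bounded by blast+
    show "bij_betw (\<lambda>x. A x + r x) Xc Xc" using D.fixed_bij[OF adm fixed] .
    show "r 0 = 0" "t 0 = 0" "u 0 = 0" "s 0 = 0" by (fact zero)+
    show "(\<lambda>x. A x + g x) ` (\<lambda>x. x + kc x + u x + s x) ` Xc \<subseteq> (\<lambda>x. x + kc x + u x + s x) ` Xc"
      using conj D.A_plus_in[OF Cr] by (auto intro!: image_eqI)
    fix x assume x: "x \<in> Xc"
    show "A (x + kc x + u x + s x) + g (x + kc x + u x + s x) =
        A x + r x + kc (A x + r x) + u (A x + r x) + s (A x + r x)" using conj[OF x] .
    show "A (Aci x + t x) + r (Aci x + t x) = x" "Aci (A x + r x) + t (A x + r x) = x"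
      using D.fixed_right_inverse[OF adm fixed x] D.fixed_left_inverse[OF adm fixed x] by simp_all
    show "jet1 r Dr 1 0 [x] = 0" "jet1 t Dt 1 0 [x] = 0" "jet1 u Du 1 0 [x] = 0" "jet1 s Ds 1 0 [x] = 0"
      using D0[OF x] by (simp_all add: jet1_def)
    show "ml_bound Xc 1 (jet1 r Dr 1 x) Lr" "ml_bound Xc 1 (jet1 t Dt 1 x) Lt"
      "ml_bound Xc 1 (jet1 u Du 1 x) Lu" "ml_bound Xc 1 (jet1 s Ds 1 x) Ls"
      using C11D(4)[OF Cr x] C11D(4)[OF Ct x] C11D(4)[OF Cu x] C11D(4)[OF Cs x]
      by (simp_all add: jet1_def ml_bound_1)
  qed
qed

theorem corollary3p10:
  fixes A :: "'a::banach \<Rightarrow> 'a" and Xc Xu Xs :: "'a set"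
    and n :: nat and Lg Lc :: real
  assumes n2: "n \<ge> 2"
    and sub: "subspace Xc" "subspace Xu" "subspace Xs"
    and cl: "closed Xc" "closed Xu" "closed Xs"
    and dsum: "\<forall>x. \<exists>!(c, u, s). c \<in> Xc \<and> u \<in> Xu \<and> s \<in> Xs \<and> x = c + u + s"
    and maxnorm: "\<forall>c\<in>Xc. \<forall>u\<in>Xu. \<forall>s\<in>Xs. norm (c + u + s) = max (norm c) (max (norm u) (norm s))"
    and A_lin: "bounded_linear A"
    and A_inv: "A ` Xc \<subseteq> Xc" "A ` Xu \<subseteq> Xu" "A ` Xs \<subseteq> Xs"
    and Ac_bij: "bij_betw A Xc Xc" and Au_bij: "bij_betw A Xu Xu"
    and spec: "\<forall>m. 1 \<le> m \<and> m \<le> n \<longrightarrow>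
                  (onorm_on Xc (inv_into Xc A))^m * onorm_on Xs A < 1 \<and>
                  onorm_on Xu (inv_into Xu A) * (onorm_on Xc A)^m < 1"
    and L_nonneg: "0 \<le> Lg" "0 \<le> Lc"
    and SN: "SN_cond n (onorm_on Xc A) (onorm_on Xc (inv_into Xc A))
               (onorm_on Xu (inv_into Xu A)) (onorm_on Xs A) Lg Lc"
  shows "\<exists>\<epsilon>0>0. \<forall>\<epsilon> g Dg kc Dkc.
     0 < \<epsilon> \<and> \<epsilon> < \<epsilon>0 \<and>
     Ckb n UNIV UNIV g Dg \<and> g 0 = 0 \<and> (\<forall>v. Dg 1 0 [v] = 0) \<and>
     (\<forall>y. ml_bound UNIV 1 (Dg 1 y) Lg) \<and>
     Ckb n Xc Xc kc Dkc \<and> kc 0 = 0 \<and> (\<forall>v\<in>Xc. Dkc 1 0 [v] = 0) \<and>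
     (\<forall>y\<in>Xc. ml_bound Xc 1 (Dkc 1 y) Lc) \<and>
     (\<forall>y. ml_bound UNIV 2 (Dg 2 y) \<epsilon>) \<and> (\<forall>y\<in>Xc. ml_bound Xc 2 (Dkc 2 y) \<epsilon>)
     \<longrightarrow>
     (let F = (\<lambda>x. A x + g x);
          Aci = inv_into Xc A;
          Lr = cLr (onorm_on Xc A) Lg Lc;
          Lt = cLt (onorm_on Xc (inv_into Xc A)) Lr;
          Lu = cLu (onorm_on Xc A) (onorm_on Xu (inv_into Xu A)) Lr Lg Lc;
          Ls = cLs (onorm_on Xc (inv_into Xc A)) (onorm_on Xs A) Lr Lg Lc
      in \<exists>r Dr ku Dku ks Dks t Dt.
        Ckb 1 Xc Xc r Dr \<and> Ckb 1 Xc Xu ku Dku \<and> Ckb 1 Xc Xs ks Dks \<and> Ckb 1 Xc Xc t Dt \<and>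
        (let K = (\<lambda>x. (x + kc x) + ku x + ks x) in
          (\<forall>x\<in>Xc. F (K x) = K (A x + r x)) \<and>
          bij_betw (\<lambda>x. A x + r x) Xc Xc \<and>
          (\<forall>x\<in>Xc. A (Aci x + t x) + r (Aci x + t x) = x \<and>
                   Aci (A x + r x) + t (A x + r x) = x) \<and>
          r 0 = 0 \<and> t 0 = 0 \<and> ku 0 = 0 \<and> ks 0 = 0 \<and>
          (\<forall>v\<in>Xc. Dr 1 0 [v] = 0 \<and> Dt 1 0 [v] = 0 \<and> Dku 1 0 [v] = 0 \<and> Dks 1 0 [v] = 0) \<and>
          (\<forall>y\<in>Xc. ml_bound Xc 1 (Dr 1 y) Lr \<and> ml_bound Xc 1 (Dt 1 y) Lt \<and>
                   ml_bound Xc 1 (Dku 1 y) Lu \<and> ml_bound Xc 1 (Dks 1 y) Ls) \<and>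
          F ` (K ` Xc) \<subseteq> K ` Xc))"
proof -
  interpret cm_setting A Xc Xu Xs n Lg Lc
    by (rule cm_setting.intro) fact+
  show ?thesis
    unfolding Let_def
    by (intro exI[of _ "1::real"] conjI zero_less_one allI impI, elim conjE)
       (rule C1_center_manifold[unfolded Lr_def Lt_def Lu_def Ls_def ac_def aci_def aui_def asn_def Aci_def Aui_def],
        (assumption | erule less_imp_le)+)
qed

end
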